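(* Let $d\ge2$, $r>1$, and let $W=(W(x))_{x\in\mathbf{R}^d}$ be a centered Gaussian field (i.e. all finite-dimensional distributions are Gaussian and $E[W(x)]=0$) which is almost surely continuous with $W(0)=0$ almost surely, and let $K(x,y)=E[W(x)W(y)]$. Let $D_1=E_1\setminus E_0$ where either $E_n=\{x:|x|<r^n\}$ or $E_n=\{x:|x_i|<r^n,\ i=1,\dots,d\}$. If there exists $\varepsilon>0$ such that \[\inf_{x\in D_1}\int_{D_1}K(x,y)\,dy\ge\varepsilon,\] then for every $a\in\mathbf{R}$, \[P\Big(\inf_{x\in D_1}W(x)\ge a\Big)>0.\] *)

theory Defs
  imports "HOL-Probability.Probability"
begin

definition centered_gaussian_rv :: "'a measure \<Rightarrow> ('a \<Rightarrow> real) \<Rightarrow> bool" where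
  "centered_gaussian_rv M X \<longleftrightarrow> X \<in> borel_measurable M \<and>
     (\<exists>\<sigma>\<ge>0. distr M lborel X =
        (if \<sigma> = 0 then return lborel 0 else density lborel (normal_density 0 \<sigma>)))"

text \<open>Centered Gaussian field: all finite-dimensional distributions are centered
  Gaussian, i.e. every finite linear combination of field values is a centered
  (possibly degenerate) Gaussian random variable.\<close>
definition centered_gaussian_field :: "'a measure \<Rightarrow> ('a \<Rightarrow> 'b \<Rightarrow> real) \<Rightarrow> bool" where
  "centered_gaussian_field M W \<longleftrightarrow>
     (\<forall>F c. finite F \<longrightarrow> centered_gaussian_rv M (\<lambda>\<omega>. \<Sum>x\<in>F. c x * W \<omega> x))"

definition Eball :: "real \<Rightarrow> nat \<Rightarrow> (real^'d) set" where
  "Eball r n = {x. norm x < r ^ n}"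

definition Ecube :: "real \<Rightarrow> nat \<Rightarrow> (real^'d) set" where
  "Ecube r n = {x. \<forall>i. \<bar>x $ i\<bar> < r ^ n}"

end

theory Submission
  imports Defs
begin

text \<open>Let \<open>Z = \<integral>\<^sub>D W(y) dy\<close> be the integral of the field over the annulus \<open>D\<close>. As an a.s.
  limit of Riemann sums, \<open>Z\<close> is a centered Gaussian jointly with the field, and
  \<open>Cov(W(x), Z) = \<integral>\<^sub>D K(x,y) dy \<ge> \<epsilon>\<close>; in particular \<open>Var Z > 0\<close>. Write
  \<open>W(x) = R(x) + c(x) Z\<close> with \<open>c(x) = Cov(W(x), Z) / Var Z \<ge> \<epsilon> / Var Z\<close>. The residual field
  \<open>R\<close> is uncorrelated with \<open>Z\<close>, hence independent of it (characteristic functions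
  factorise). Since the paths are a.s. continuous and \<open>D\<close> is bounded, \<open>inf\<^sub>D R \<ge> -n\<close>
  with positive probability for some \<open>n\<close>, while \<open>Z \<ge> t\<close> with positive probability for
  every \<open>t\<close>. On the intersection of these independent events \<open>W \<ge> -n + \<epsilon> t / Var Z\<close> on
  \<open>D\<close>, which is \<open>\<ge> a\<close> for \<open>t\<close> large.\<close>

section \<open>Characteristic functions of centered Gaussian variables\<close>

definition char_rv :: "'a measure \<Rightarrow> ('a \<Rightarrow> real) \<Rightarrow> real \<Rightarrow> complex" where
  "char_rv M X u = (CLINT \<omega>|M. iexp (u * X \<omega>))"

definition gaussian_char :: "'a measure \<Rightarrow> ('a \<Rightarrow> real) \<Rightarrow> real \<Rightarrow> bool" where
  "gaussian_char M X v \<longleftrightarrow> X \<in> borel_measurable M \<and> 0 \<le> v \<and>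
     (\<forall>u. char_rv M X u = complex_of_real (exp (-(u^2 * v)/2)))"

lemma char_rv_eq_char_distr:
  assumes "X \<in> borel_measurable M"
  shows "char_rv M X u = char (distr M borel X) u"
  unfolding char_def char_rv_def using assms by (subst integral_distr) auto

lemma char_normal_density:
  assumes "\<sigma> > 0"
  shows "char (density lborel (normal_density 0 \<sigma>)) u = complex_of_real (exp (-(u^2 * \<sigma>^2)/2))"
proof -
  have scale: "normal_density 0 \<sigma> (\<sigma> * y) = std_normal_density y / \<sigma>" for y
    using assms unfolding normal_density_def
    by (simp add: power_mult_distrib real_sqrt_mult field_simps)
  have "char (density lborel (normal_density 0 \<sigma>)) u = (\<integral>x. normal_density 0 \<sigma> x *\<^sub>R iexp (u * x) \<partial>lborel)"
    unfolding char_def by (simp add: integral_density)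
  also have "\<dots> = \<sigma> *\<^sub>R (\<integral>y. normal_density 0 \<sigma> (0 + \<sigma> * y) *\<^sub>R iexp (u * (0 + \<sigma> * y)) \<partial>lborel)"
    using assms by (subst lborel_integral_real_affine[where c=\<sigma> and t=0]) auto
  also have "\<dots> = (\<integral>y. std_normal_density y *\<^sub>R iexp ((u * \<sigma>) * y) \<partial>lborel)"
  proof -
    have rescale: "normal_density 0 \<sigma> (0 + \<sigma> * y) *\<^sub>R iexp (u * (0 + \<sigma> * y))
        = (1/\<sigma>) *\<^sub>R (std_normal_density y *\<^sub>R iexp ((u * \<sigma>) * y))" for y
      using scale by (simp add: mult.assoc)
    show ?thesis using assms unfolding rescale integral_scaleR_right by simp
  qed
  also have "\<dots> = char std_normal_distribution (u * \<sigma>)"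
    unfolding char_def by (subst integral_density) auto
  also have "\<dots> = complex_of_real (exp (-(u^2 * \<sigma>^2)/2))"
    by (simp add: char_std_normal_distribution power_mult_distrib)
  finally show ?thesis .
qed

lemma centered_gaussian_rv_normal:
  assumes "centered_gaussian_rv M X"
  obtains \<sigma> where "\<sigma> > 0" "distr M lborel X = density lborel (normal_density 0 \<sigma>)"
  | "distr M lborel X = return lborel 0"
  using assms unfolding centered_gaussian_rv_def by (metis less_eq_real_def)

lemma
  assumes "\<sigma> > 0"
  shows integrable_square_normal_density: "integrable (density lborel (normal_density 0 \<sigma>)) (\<lambda>x. x^2)"
    and integral_square_normal_density: "(\<integral>x. x^2 \<partial>density lborel (normal_density 0 \<sigma>)) = \<sigma>^2"
proof -
  have "integrable lborel (\<lambda>x. normal_density 0 \<sigma> x * (x - 0)^2)"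
    using assms by (rule integrable_normal_moment)
  then show "integrable (density lborel (normal_density 0 \<sigma>)) (\<lambda>x. x^2)"
    by (simp add: integrable_density)
  have "(\<integral>x. x^2 \<partial>density lborel (normal_density 0 \<sigma>)) = (\<integral>x. normal_density 0 \<sigma> x * (x - 0)^(2*1) \<partial>lborel)"
    by (simp add: integral_density)
  also have "\<dots> = \<sigma>^2"
    using assms by (subst integral_normal_moment_even) (auto simp: power2_eq_square)
  finally show "(\<integral>x. x^2 \<partial>density lborel (normal_density 0 \<sigma>)) = \<sigma>^2" .
qed

lemma centered_gaussian_rv_gaussian_char:
  assumes M: "prob_space M" and X: "centered_gaussian_rv M X"
  shows "integrable M (\<lambda>\<omega>. (X \<omega>)^2)" and "gaussian_char M X (\<integral>\<omega>. (X \<omega>)^2 \<partial>M)"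
proof -
  have [measurable]: "X \<in> borel_measurable M"
    using X unfolding centered_gaussian_rv_def by auto
  have integrable_eq: "integrable M (\<lambda>\<omega>. g (X \<omega>)) \<longleftrightarrow> integrable (distr M lborel X) g"
    and integral_eq: "(\<integral>\<omega>. g (X \<omega>) \<partial>M) = (\<integral>x. g x \<partial>distr M lborel X)"
    if [measurable]: "g \<in> borel_measurable borel" for g :: "real \<Rightarrow> 'b::{banach,second_countable_topology}"
    by (auto simp: integrable_distr_eq integral_distr)
  have "integrable M (\<lambda>\<omega>. (X \<omega>)^2) \<and> gaussian_char M X (\<integral>\<omega>. (X \<omega>)^2 \<partial>M)"
    using X
  proof (cases rule: centered_gaussian_rv_normal)
    case (1 \<sigma>)
    have "char_rv M X u = complex_of_real (exp (-(u^2 * \<sigma>^2)/2))" for u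
      unfolding char_rv_def using integral_eq[of "\<lambda>x. iexp (u * x)"] 1 char_normal_density[of \<sigma> u]
      by (simp add: char_def)
    then show ?thesis
      using 1 integrable_eq[of "\<lambda>x. x^2"] integral_eq[of "\<lambda>x. x^2"]
        integrable_square_normal_density integral_square_normal_density
      unfolding gaussian_char_def by simp
  next
    case 2
    have "AE x in return lborel 0. x^2 = (0::real)" by (simp add: AE_return)
    then have "integrable (return lborel (0::real)) (\<lambda>x. x^2)"
      by (subst integrable_cong_AE[where g="\<lambda>_. 0"]) auto
    then have "integrable M (\<lambda>\<omega>. (X \<omega>)^2)" using integrable_eq[of "\<lambda>x. x^2"] 2 by simp
    moreover have "(\<integral>\<omega>. (X \<omega>)^2 \<partial>M) = 0"
      using integral_eq[of "\<lambda>x. x^2"] 2 by (simp add: integral_return)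
    moreover have "char_rv M X u = 1" for u
      unfolding char_rv_def using integral_eq[of "\<lambda>x. iexp (u * x)"] 2 by (simp add: integral_return)
    ultimately show ?thesis unfolding gaussian_char_def by simp
  qed
  then show "integrable M (\<lambda>\<omega>. (X \<omega>)^2)" "gaussian_char M X (\<integral>\<omega>. (X \<omega>)^2 \<partial>M)" by auto
qed

lemma gaussian_char_variance_unique: "gaussian_char M X v \<Longrightarrow> gaussian_char M X w \<Longrightarrow> v = w"
  unfolding gaussian_char_def
  by (metis exp_inj_iff of_real_eq_iff power_one mult_1 neg_equal_iff_equal
      divide_cancel_right zero_neq_numeral)

lemma (in prob_space) gaussian_char_zero: "gaussian_char M (\<lambda>\<omega>. 0) 0"
  unfolding gaussian_char_def char_rv_def by (simp add: prob_space)

lemma gaussian_char_iexp: "gaussian_char M X v \<Longrightarrow> (CLINT \<omega>|M. iexp (X \<omega>)) = complex_of_real (exp (-v/2))"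
proof -
  assume "gaussian_char M X v"
  then have "char_rv M X 1 = complex_of_real (exp (-(1^2 * v)/2))" unfolding gaussian_char_def by blast
  then show ?thesis unfolding char_rv_def by simp
qed

lemma (in prob_space) isCont_char_rv:
  assumes "X \<in> borel_measurable M"
  shows "isCont (char_rv M X) u"
proof -
  have "char_rv M X = char (distr M borel X)"
    using assms by (auto simp: char_rv_eq_char_distr)
  moreover have "real_distribution (distr M borel X)" using assms by simp
  ultimately show ?thesis by (simp add: real_distribution.isCont_char)
qed

lemma (in prob_space) char_rv_zero: "char_rv M X 0 = 1"
  unfolding char_rv_def by (simp add: prob_space)

lemma (in prob_space) char_rv_LIMSEQ:
  assumes [measurable]: "\<And>n. Xn n \<in> borel_measurable M" "X \<in> borel_measurable M"
    and "AE \<omega> in M. (\<lambda>n. Xn n \<omega>) \<longlonglongrightarrow> X \<omega>"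
  shows "(\<lambda>n. char_rv M (Xn n) u) \<longlonglongrightarrow> char_rv M X u"
  unfolding char_rv_def
proof (rule integral_dominated_convergence[where w="\<lambda>_. 1"])
  show "AE \<omega> in M. (\<lambda>n. iexp (u * Xn n \<omega>)) \<longlonglongrightarrow> iexp (u * X \<omega>)"
    using assms(3) by eventually_elim (intro tendsto_intros)
qed auto

text \<open>If \<open>\<phi>\<close> is a pointwise limit of Gaussian characteristic functions then
  \<open>Re \<phi> 1 = (Re \<phi> (1/k))^(k^2)\<close>, and \<open>Re \<phi> (1/k) \<longrightarrow> 1\<close> by continuity of \<open>\<phi>\<close> at 0.\<close>
lemma (in prob_space) Re_char_rv_pos_of_gaussian_limit:
  assumes [measurable]: "X \<in> borel_measurable M"
    and conv: "\<And>u. (\<lambda>n. exp (-(u^2 * v n)/2)) \<longlonglongrightarrow> Re (char_rv M X u)"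
  shows "Re (char_rv M X 1) > 0"
proof -
  define r where "r u = Re (char_rv M X u)" for u
  have r_power: "r (1 / real (Suc k)) ^ ((Suc k)^2) = r 1" for k
  proof -
    have "exp (-((1 / real (Suc k))^2 * v n)/2) ^ ((Suc k)^2) = exp (-(1^2 * v n)/2)" for n
    proof -
      have "exp (-((1 / real (Suc k))^2 * v n)/2) ^ ((Suc k)^2)
          = exp (real ((Suc k)^2) * (-((1 / real (Suc k))^2 * v n)/2))"
        by (simp only: exp_of_nat_mult)
      also have "real ((Suc k)^2) * (-((1 / real (Suc k))^2 * v n)/2) = -(1^2 * v n)/2"
        by (simp add: power_divide of_nat_power del: of_nat_Suc)
      finally show ?thesis .
    qed
    moreover have "(\<lambda>n. exp (-((1 / real (Suc k))^2 * v n)/2) ^ ((Suc k)^2)) \<longlonglongrightarrow> r (1 / real (Suc k)) ^ ((Suc k)^2)"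
      unfolding r_def by (intro tendsto_power conv)
    ultimately have "(\<lambda>n. exp (-(1^2 * v n)/2)) \<longlonglongrightarrow> r (1 / real (Suc k)) ^ ((Suc k)^2)" by simp
    then show ?thesis using conv[of 1] unfolding r_def by (rule LIMSEQ_unique)
  qed
  have "r 1 \<ge> 0" using conv[of 1] unfolding r_def by (rule LIMSEQ_le_const) auto
  moreover have "r 1 \<noteq> 0"
  proof
    assume "r 1 = 0"
    then have "r (1 / real (Suc k)) = 0" for k using r_power[of k] by simp
    moreover have "(\<lambda>k. r (1 / real (Suc k))) \<longlonglongrightarrow> r 0"
      unfolding r_def
      by (intro tendsto_Re isCont_tendsto_compose[OF isCont_char_rv] LIMSEQ_Suc[OF lim_inverse_n']) simp
    ultimately have "(\<lambda>k. 0::real) \<longlonglongrightarrow> 1" using char_rv_zero unfolding r_def by simp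
    then show False using LIMSEQ_unique tendsto_const by fastforce
  qed
  ultimately show ?thesis unfolding r_def by simp
qed

lemma (in prob_space) gaussian_char_LIMSEQ:
  assumes [measurable]: "\<And>n. Xn n \<in> borel_measurable M" "X \<in> borel_measurable M"
    and lim: "AE \<omega> in M. (\<lambda>n. Xn n \<omega>) \<longlonglongrightarrow> X \<omega>"
    and gauss: "\<And>n. gaussian_char M (Xn n) (v n)"
  shows "\<exists>w. v \<longlonglongrightarrow> w \<and> gaussian_char M X w"
proof -
  have conv: "(\<lambda>n. exp (-(u^2 * v n)/2)) \<longlonglongrightarrow> Re (char_rv M X u)" for u
    using tendsto_Re[OF char_rv_LIMSEQ[OF assms(1,2) lim, of u]] gauss
    unfolding gaussian_char_def by simp
  define w where "w = -2 * ln (Re (char_rv M X 1))"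
  have "(\<lambda>n. -2 * ln (exp (-(1^2 * v n)/2))) \<longlonglongrightarrow> w"
    unfolding w_def using Re_char_rv_pos_of_gaussian_limit[OF _ conv] conv[of 1]
    by (intro tendsto_intros) auto
  then have v_lim: "v \<longlonglongrightarrow> w" by simp
  have "char_rv M X u = complex_of_real (exp (-(u^2 * w)/2))" for u
  proof (rule LIMSEQ_unique)
    show "(\<lambda>n. char_rv M (Xn n) u) \<longlonglongrightarrow> char_rv M X u" by (rule char_rv_LIMSEQ[OF assms(1,2) lim])
    show "(\<lambda>n. char_rv M (Xn n) u) \<longlonglongrightarrow> complex_of_real (exp (-(u^2 * w)/2))"
      using gauss unfolding gaussian_char_def by (simp add: tendsto_intros v_lim)
  qed
  moreover have "0 \<le> w"
    using v_lim by (rule LIMSEQ_le_const) (use gauss in \<open>auto simp: gaussian_char_def\<close>)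
  ultimately show ?thesis using v_lim unfolding gaussian_char_def by auto
qed

lemma measure_normal_density_atLeast_pos:
  assumes "\<sigma> > 0"
  shows "measure (density lborel (normal_density 0 \<sigma>)) {t..} > 0"
proof -
  interpret N: prob_space "density lborel (normal_density 0 \<sigma>)"
    using assms by (rule prob_space_normal_density)
  have "emeasure (density lborel (normal_density 0 \<sigma>)) {t..} \<noteq> 0"
  proof
    assume "emeasure (density lborel (normal_density 0 \<sigma>)) {t..} = 0"
    then have "AE x in lborel. ennreal (normal_density 0 \<sigma> x) * indicator {t..} x = 0"
      by (subst (asm) emeasure_density) (auto simp: nn_integral_0_iff_AE)
    then have "AE x in lborel. x \<notin> {t..t+1}"
    proof eventually_elim
      case (elim x)
      then show ?case using normal_density_pos[OF assms, of 0 x] by (auto simp: indicator_def)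
    qed
    then have "emeasure lborel {t..t+1} = 0"
      by (subst (asm) AE_iff_measurable[where N="{t..t+1}"]) auto
    then show False by simp
  qed
  then show ?thesis by (simp add: N.emeasure_eq_measure zero_less_measure_iff)
qed

lemma (in prob_space) gaussian_char_prob_ge_pos:
  assumes gauss: "gaussian_char M Z v" and "v > 0"
  shows "prob {\<omega>\<in>space M. t \<le> Z \<omega>} > 0"
proof -
  have [measurable]: "Z \<in> borel_measurable M" using gauss unfolding gaussian_char_def by simp
  define \<sigma> where "\<sigma> = sqrt v"
  have \<sigma>: "\<sigma> > 0" unfolding \<sigma>_def using \<open>v > 0\<close> by simp
  have "char (distr M borel Z) = char (density lborel (normal_density 0 \<sigma>))"
    using gauss char_normal_density[OF \<sigma>] \<open>v > 0\<close>
    by (auto simp: gaussian_char_def \<sigma>_def fun_eq_iff char_rv_eq_char_distr[symmetric])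
  then have "distr M borel Z = density lborel (normal_density 0 \<sigma>)"
    using prob_space_normal_density[OF \<sigma>]
    by (intro Levy_uniqueness) (auto simp: real_distribution_def real_distribution_axioms_def prob_space_distr)
  moreover have "prob {\<omega>\<in>space M. t \<le> Z \<omega>} = measure (distr M borel Z) {t..}"
    by (subst measure_distr) (auto intro!: arg_cong[where f=prob])
  ultimately show ?thesis using measure_normal_density_atLeast_pos[OF \<sigma>] by simp
qed

section \<open>Factorising characteristic functions gives independence\<close>

lemma iexp_add: "iexp (a + b) = iexp a * iexp b"
  by (simp add: distrib_left exp_add)

lemma cnj_iexp: "cnj (iexp t) = iexp (- t)"
  by (simp add: exp_cnj)

lemma prod_indicator_eq_if:
  "finite S \<Longrightarrow> (\<Prod>k\<in>S. indicator (B k) (V k \<omega>) :: real) = (if \<forall>k\<in>S. V k \<omega> \<in> B k then 1 else 0)"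
  by (induction S rule: finite_induct) (auto simp: indicator_def)

lemma abs_prod_indicator_le_1: "\<bar>\<Prod>k\<in>S. indicator (B k) (V k \<omega>) :: real\<bar> \<le> 1"
  by (cases "finite S") (simp_all add: prod_indicator_eq_if)

context prob_space
begin

lemma norm_integral_iexp_le_1: "norm (CLINT \<omega>|M. iexp (f \<omega>)) \<le> 1"
  using integral_norm_bound[of M "\<lambda>\<omega>. iexp (f \<omega>)"] by (simp add: prob_space)

lemma real_distribution_distr_density:
  fixes p :: "'a \<Rightarrow> real"
  assumes [measurable]: "p \<in> borel_measurable M" "X \<in> borel_measurable M"
    and nonneg: "\<And>\<omega>. 0 \<le> p \<omega>" and bounded: "\<And>\<omega>. p \<omega> \<le> B" and "(\<integral>\<omega>. p \<omega> \<partial>M) = 1"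
  shows "real_distribution (distr (density M p) borel X)"
proof -
  have "integrable M p"
    by (rule integrable_const_bound[where B=B]) (use nonneg bounded in auto)
  then have "emeasure (density M p) (space (density M p)) = ennreal (\<integral>\<omega>. p \<omega> \<partial>M)"
    using nonneg by (simp add: emeasure_density nn_integral_eq_integral flip: nn_integral_set_ennreal)
  then interpret D: prob_space "density M p" using assms(5) by (intro prob_spaceI) simp
  show ?thesis unfolding real_distribution_def real_distribution_axioms_def
    by (auto intro!: D.prob_space_distr)
qed

lemma char_distr_density:
  fixes p :: "'a \<Rightarrow> real"
  assumes [measurable]: "p \<in> borel_measurable M" "X \<in> borel_measurable M"
    and "\<And>\<omega>. 0 \<le> p \<omega>"
  shows "char (distr (density M p) borel X) u = (CLINT \<omega>|M. p \<omega> *\<^sub>R iexp (u * X \<omega>))"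
  unfolding char_def using assms by (subst integral_distr) (auto simp: integral_density)

lemma measure_distr_density:
  fixes p :: "'a \<Rightarrow> real"
  assumes [measurable]: "p \<in> borel_measurable M" "X \<in> borel_measurable M" "A \<in> sets borel"
    and "\<And>\<omega>. 0 \<le> p \<omega>"
  shows "measure (distr (density M p) borel X) A = (\<integral>\<omega>. indicator A (X \<omega>) * p \<omega> \<partial>M)"
proof -
  have "measure (distr (density M p) borel X) A = (\<integral>x. indicator A x \<partial>distr (density M p) borel X)"
    by simp
  also have "\<dots> = (\<integral>\<omega>. p \<omega> * indicator A (X \<omega>) \<partial>M)"
    using assms(4) by (subst integral_distr) (auto simp: integral_density)
  finally show ?thesis by (simp add: mult.commute)
qed

text \<open>Two bounded weights with the same Fourier transform along \<open>X\<close> give the same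
  measure to every event \<open>X \<in> A\<close>: after normalisation both define probability laws
  for \<open>X\<close> with equal characteristic functions.\<close>
lemma integral_indicator_eq_of_fourier_eq_nonneg:
  fixes p n :: "'a \<Rightarrow> real"
  assumes [measurable]: "X \<in> borel_measurable M"
    and meas [measurable]: "p \<in> borel_measurable M" "n \<in> borel_measurable M"
    and nonneg: "\<And>\<omega>. 0 \<le> p \<omega>" "\<And>\<omega>. 0 \<le> n \<omega>"
    and bounded: "\<And>\<omega>. p \<omega> \<le> B" "\<And>\<omega>. n \<omega> \<le> B"
    and fourier: "\<And>u. (CLINT \<omega>|M. p \<omega> *\<^sub>R iexp (u * X \<omega>)) = (CLINT \<omega>|M. n \<omega> *\<^sub>R iexp (u * X \<omega>))"
    and [measurable]: "A \<in> sets borel"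
  shows "(\<integral>\<omega>. indicator A (X \<omega>) * p \<omega> \<partial>M) = (\<integral>\<omega>. indicator A (X \<omega>) * n \<omega> \<partial>M)"
proof -
  have int_p: "integrable M p" and int_n: "integrable M n"
    by (auto intro!: integrable_const_bound[where B=B] simp: nonneg bounded)
  define m where "m = (\<integral>\<omega>. p \<omega> \<partial>M)"
  have m_n: "m = (\<integral>\<omega>. n \<omega> \<partial>M)"
    using fourier[of 0] by (simp add: m_def scaleR_conv_of_real)
  show ?thesis
  proof (cases "m = 0")
    case True
    then have "AE \<omega> in M. p \<omega> = 0" "AE \<omega> in M. n \<omega> = 0"
      using integral_nonneg_eq_0_iff_AE[OF int_p] integral_nonneg_eq_0_iff_AE[OF int_n] nonneg m_n
      unfolding m_def by auto
    then show ?thesis by (intro integral_cong_AE) auto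
  next
    case False
    then have "m > 0" using nonneg by (simp add: m_def less_le)
    define law where "law q = distr (density M (\<lambda>\<omega>. q \<omega> / m)) borel X" for q
    have char_law: "char (law q) u = (1/m) *\<^sub>R (CLINT \<omega>|M. q \<omega> *\<^sub>R iexp (u * X \<omega>))"
      if [measurable]: "q \<in> borel_measurable M" and "\<And>\<omega>. 0 \<le> q \<omega>" for q u
    proof -
      have "char (law q) u = (CLINT \<omega>|M. (1/m) *\<^sub>R (q \<omega> *\<^sub>R iexp (u * X \<omega>)))"
        unfolding law_def using \<open>m > 0\<close> that(2)
        by (subst char_distr_density) (auto simp: divide_inverse mult.commute)
      then show ?thesis by (simp only: integral_scaleR_right)
    qed
    have measure_law: "measure (law q) A = (\<integral>\<omega>. indicator A (X \<omega>) * q \<omega> \<partial>M) / m"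
      if [measurable]: "q \<in> borel_measurable M" and "\<And>\<omega>. 0 \<le> q \<omega>" for q
      unfolding law_def using \<open>m > 0\<close> that(2) by (subst measure_distr_density) auto
    have "real_distribution (law p)" "real_distribution (law n)"
      unfolding law_def using \<open>m > 0\<close> nonneg bounded m_n
      by (auto intro!: real_distribution_distr_density[where B="B/m"]
          simp: m_def divide_right_mono)
    moreover have "char (law p) u = char (law n) u" for u
      unfolding char_law[OF meas(1) nonneg(1)] char_law[OF meas(2) nonneg(2)] fourier ..
    ultimately have "law p = law n" by (intro Levy_uniqueness) auto
    then have "measure (law p) A = measure (law n) A" by simp
    then show ?thesis using \<open>m > 0\<close> by (simp add: measure_law nonneg)
  qed
qed

lemma integral_indicator_eq_0_of_fourier_eq_0:
  fixes \<psi> :: "'a \<Rightarrow> real"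
  assumes [measurable]: "X \<in> borel_measurable M" "\<psi> \<in> borel_measurable M"
    and bounded: "\<And>\<omega>. \<bar>\<psi> \<omega>\<bar> \<le> B"
    and fourier: "\<And>u. (CLINT \<omega>|M. \<psi> \<omega> *\<^sub>R iexp (u * X \<omega>)) = 0"
    and [measurable]: "A \<in> sets borel"
  shows "(\<integral>\<omega>. indicator A (X \<omega>) * \<psi> \<omega> \<partial>M) = 0"
proof -
  define p where "p \<omega> = max (\<psi> \<omega>) 0" for \<omega>
  define n where "n \<omega> = max (- \<psi> \<omega>) 0" for \<omega>
  have [measurable]: "p \<in> borel_measurable M" "n \<in> borel_measurable M" unfolding p_def n_def by auto
  have \<psi>_eq: "\<psi> \<omega> = p \<omega> - n \<omega>" for \<omega> unfolding p_def n_def by auto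
  have nonneg: "0 \<le> p \<omega>" "0 \<le> n \<omega>" for \<omega> unfolding p_def n_def by auto
  have le_B: "p \<omega> \<le> B" "n \<omega> \<le> B" for \<omega> unfolding p_def n_def using bounded[of \<omega>] by auto
  have "0 \<le> B" using bounded[of undefined] by simp
  have int: "integrable M (\<lambda>\<omega>. p \<omega> *\<^sub>R iexp (u * X \<omega>))" "integrable M (\<lambda>\<omega>. n \<omega> *\<^sub>R iexp (u * X \<omega>))"
    "integrable M (\<lambda>\<omega>. indicator A (X \<omega>) * p \<omega>)" "integrable M (\<lambda>\<omega>. indicator A (X \<omega>) * n \<omega>)" for u
    by (auto intro!: integrable_const_bound[where B=B] simp: nonneg le_B \<open>0 \<le> B\<close> norm_mult indicator_def)
  have "(CLINT \<omega>|M. p \<omega> *\<^sub>R iexp (u * X \<omega>)) = (CLINT \<omega>|M. n \<omega> *\<^sub>R iexp (u * X \<omega>))" for u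
    using fourier[of u] int by (simp add: \<psi>_eq scaleR_diff_left)
  then have "(\<integral>\<omega>. indicator A (X \<omega>) * p \<omega> \<partial>M) = (\<integral>\<omega>. indicator A (X \<omega>) * n \<omega> \<partial>M)"
    by (intro integral_indicator_eq_of_fourier_eq_nonneg[where B=B]) (auto simp: nonneg le_B)
  then show ?thesis using int by (simp add: \<psi>_eq right_diff_distrib)
qed

text \<open>A complex weight with vanishing Fourier transform along \<open>X\<close> has real and
  imaginary parts with the same property, because the transform of \<open>cnj \<psi>\<close> at \<open>u\<close>
  is the conjugate of the transform of \<open>\<psi>\<close> at \<open>-u\<close>.\<close>
lemma fourier_Re_Im_eq_0:
  fixes \<psi> :: "'a \<Rightarrow> complex"
  assumes [measurable]: "X \<in> borel_measurable M" "\<psi> \<in> borel_measurable M"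
    and bounded: "\<And>\<omega>. norm (\<psi> \<omega>) \<le> B"
    and fourier: "\<And>u. (CLINT \<omega>|M. iexp (u * X \<omega>) * \<psi> \<omega>) = 0"
  shows "(CLINT \<omega>|M. Re (\<psi> \<omega>) *\<^sub>R iexp (u * X \<omega>)) = 0"
    and "(CLINT \<omega>|M. Im (\<psi> \<omega>) *\<^sub>R iexp (u * X \<omega>)) = 0"
proof -
  have [measurable]: "cnj \<in> borel_measurable borel"
    by (intro borel_measurable_continuous_onI continuous_intros)
  have int: "integrable M (\<lambda>\<omega>. iexp (u * X \<omega>) * f \<omega>)"
    if [measurable]: "f \<in> borel_measurable M" and "\<And>\<omega>. norm (f \<omega>) \<le> B" for f :: "'a \<Rightarrow> complex"
    by (rule integrable_const_bound[where B=B]) (use that in \<open>auto simp: norm_mult\<close>)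
  have int_\<psi>: "integrable M (\<lambda>\<omega>. iexp (u * X \<omega>) * \<psi> \<omega>)"
    and int_cnj: "integrable M (\<lambda>\<omega>. iexp (u * X \<omega>) * cnj (\<psi> \<omega>))"
    by (rule int; simp add: bounded)+
  have fourier_cnj: "(CLINT \<omega>|M. iexp (u * X \<omega>) * cnj (\<psi> \<omega>)) = 0"
  proof -
    have "iexp (u * X \<omega>) * cnj (\<psi> \<omega>) = cnj (iexp ((-u) * X \<omega>) * \<psi> \<omega>)" for \<omega>
      by (simp only: complex_cnj_mult cnj_iexp) simp
    then have "(CLINT \<omega>|M. iexp (u * X \<omega>) * cnj (\<psi> \<omega>)) = cnj (CLINT \<omega>|M. iexp ((-u) * X \<omega>) * \<psi> \<omega>)"
      by (simp only: Bochner_Integration.integral_cnj)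
    then show ?thesis using fourier[of "-u"] by simp
  qed
  have "Re (\<psi> \<omega>) *\<^sub>R iexp (u * X \<omega>) = (iexp (u * X \<omega>) * \<psi> \<omega> + iexp (u * X \<omega>) * cnj (\<psi> \<omega>)) / 2" for \<omega>
    by (simp add: scaleR_conv_of_real distrib_left[symmetric] complex_add_cnj)
  then have "(CLINT \<omega>|M. Re (\<psi> \<omega>) *\<^sub>R iexp (u * X \<omega>))
      = (CLINT \<omega>|M. iexp (u * X \<omega>) * \<psi> \<omega> + iexp (u * X \<omega>) * cnj (\<psi> \<omega>)) / 2"
    by (simp only: integral_divide_zero)
  then show "(CLINT \<omega>|M. Re (\<psi> \<omega>) *\<^sub>R iexp (u * X \<omega>)) = 0"
    using Bochner_Integration.integral_add[OF int_\<psi> int_cnj] fourier[of u] fourier_cnj by simp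
  have "Im (\<psi> \<omega>) *\<^sub>R iexp (u * X \<omega>) = (iexp (u * X \<omega>) * \<psi> \<omega> - iexp (u * X \<omega>) * cnj (\<psi> \<omega>)) / (2 * \<i>)" for \<omega>
  proof -
    have "iexp (u * X \<omega>) * \<psi> \<omega> - iexp (u * X \<omega>) * cnj (\<psi> \<omega>) = iexp (u * X \<omega>) * (complex_of_real (2 * Im (\<psi> \<omega>)) * \<i>)"
      by (simp only: right_diff_distrib[symmetric] complex_diff_cnj)
    then show ?thesis by (simp add: scaleR_conv_of_real algebra_simps)
  qed
  then have "(CLINT \<omega>|M. Im (\<psi> \<omega>) *\<^sub>R iexp (u * X \<omega>))
      = (CLINT \<omega>|M. iexp (u * X \<omega>) * \<psi> \<omega> - iexp (u * X \<omega>) * cnj (\<psi> \<omega>)) / (2 * \<i>)"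
    by (simp only: integral_divide_zero)
  then show "(CLINT \<omega>|M. Im (\<psi> \<omega>) *\<^sub>R iexp (u * X \<omega>)) = 0"
    using Bochner_Integration.integral_diff[OF int_\<psi> int_cnj] fourier[of u] fourier_cnj by simp
qed

lemma integral_indicator_eq_of_fourier_eq:
  fixes \<psi>1 \<psi>2 :: "'a \<Rightarrow> complex"
  assumes [measurable]: "X \<in> borel_measurable M" "\<psi>1 \<in> borel_measurable M" "\<psi>2 \<in> borel_measurable M"
    and bounded: "\<And>\<omega>. norm (\<psi>1 \<omega>) \<le> B" "\<And>\<omega>. norm (\<psi>2 \<omega>) \<le> B"
    and fourier: "\<And>u. (CLINT \<omega>|M. iexp (u * X \<omega>) * \<psi>1 \<omega>) = (CLINT \<omega>|M. iexp (u * X \<omega>) * \<psi>2 \<omega>)"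
    and [measurable]: "A \<in> sets borel"
  shows "(CLINT \<omega>|M. indicator A (X \<omega>) *\<^sub>R \<psi>1 \<omega>) = (CLINT \<omega>|M. indicator A (X \<omega>) *\<^sub>R \<psi>2 \<omega>)"
proof -
  define \<psi> where "\<psi> \<omega> = \<psi>1 \<omega> - \<psi>2 \<omega>" for \<omega>
  have [measurable]: "\<psi> \<in> borel_measurable M" unfolding \<psi>_def by simp
  have bounded_\<psi>: "norm (\<psi> \<omega>) \<le> 2 * B" for \<omega>
    unfolding \<psi>_def using norm_triangle_ineq4[of "\<psi>1 \<omega>" "\<psi>2 \<omega>"] bounded[of \<omega>] by simp
  have "0 \<le> B" using bounded(1)[of undefined] norm_ge_zero order_trans by blast
  have int: "integrable M (\<lambda>\<omega>. iexp (u * X \<omega>) * \<psi>1 \<omega>)" "integrable M (\<lambda>\<omega>. iexp (u * X \<omega>) * \<psi>2 \<omega>)"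
    "integrable M (\<lambda>\<omega>. indicator A (X \<omega>) *\<^sub>R \<psi>1 \<omega>)" "integrable M (\<lambda>\<omega>. indicator A (X \<omega>) *\<^sub>R \<psi>2 \<omega>)"
    for u
    by (auto intro!: integrable_const_bound[where B=B] simp: norm_mult bounded \<open>0 \<le> B\<close> indicator_def)
  then have fourier_\<psi>: "(CLINT \<omega>|M. iexp (u * X \<omega>) * \<psi> \<omega>) = 0" for u
    using fourier[of u] by (simp add: \<psi>_def right_diff_distrib)
  have bounded_Re: "\<bar>Re (\<psi> \<omega>)\<bar> \<le> 2 * B" and bounded_Im: "\<bar>Im (\<psi> \<omega>)\<bar> \<le> 2 * B" for \<omega>
    using abs_Re_le_cmod[of "\<psi> \<omega>"] abs_Im_le_cmod[of "\<psi> \<omega>"] bounded_\<psi>[of \<omega>] by linarith+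
  have "(\<integral>\<omega>. indicator A (X \<omega>) * Re (\<psi> \<omega>) \<partial>M) = 0" "(\<integral>\<omega>. indicator A (X \<omega>) * Im (\<psi> \<omega>) \<partial>M) = 0"
    by (auto intro!: integral_indicator_eq_0_of_fourier_eq_0 bounded_Re bounded_Im
        fourier_Re_Im_eq_0[OF _ _ bounded_\<psi> fourier_\<psi>])
  moreover have int_A: "integrable M (\<lambda>\<omega>. indicator A (X \<omega>) *\<^sub>R \<psi> \<omega>)"
    using int(3,4) by (simp add: \<psi>_def scaleR_diff_right)
  ultimately have "(CLINT \<omega>|M. indicator A (X \<omega>) *\<^sub>R \<psi> \<omega>) = 0"
    using integral_Re[OF int_A] integral_Im[OF int_A] by (intro complex_eqI) simp_all
  then show ?thesis using int(3,4) by (simp add: \<psi>_def scaleR_diff_right)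
qed

lemma integral_indicator_factorizes:
  fixes P Y V Z :: "'a \<Rightarrow> real"
  assumes [measurable]: "P \<in> borel_measurable M" "Y \<in> borel_measurable M"
    "V \<in> borel_measurable M" "Z \<in> borel_measurable M" "B \<in> sets borel"
    and "\<And>\<omega>. \<bar>P \<omega>\<bar> \<le> 1"
    and factorizes: "\<And>u. (CLINT \<omega>|M. P \<omega> *\<^sub>R (iexp (u * V \<omega> + Y \<omega>) * iexp (v * Z \<omega>))) =
        (CLINT \<omega>|M. P \<omega> *\<^sub>R iexp (u * V \<omega> + Y \<omega>)) * (CLINT \<omega>|M. iexp (v * Z \<omega>))"
  shows "(CLINT \<omega>|M. (indicator B (V \<omega>) * P \<omega>) *\<^sub>R (iexp (Y \<omega>) * iexp (v * Z \<omega>))) =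
      (CLINT \<omega>|M. (indicator B (V \<omega>) * P \<omega>) *\<^sub>R iexp (Y \<omega>)) * (CLINT \<omega>|M. iexp (v * Z \<omega>))"
proof -
  define c where "c = (CLINT \<omega>|M. iexp (v * Z \<omega>))"
  have "norm c \<le> 1" unfolding c_def by (rule norm_integral_iexp_le_1)
  define \<psi>1 where "\<psi>1 \<omega> = P \<omega> *\<^sub>R (iexp (Y \<omega>) * iexp (v * Z \<omega>))" for \<omega>
  define \<psi>2 where "\<psi>2 \<omega> = P \<omega> *\<^sub>R iexp (Y \<omega>) * c" for \<omega>
  have [measurable]: "\<psi>1 \<in> borel_measurable M" "\<psi>2 \<in> borel_measurable M"
    unfolding \<psi>1_def \<psi>2_def by measurable
  have bounded: "norm (\<psi>1 \<omega>) \<le> 1" "norm (\<psi>2 \<omega>) \<le> 1" for \<omega>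
    unfolding \<psi>1_def \<psi>2_def using assms(6)[of \<omega>] \<open>norm c \<le> 1\<close>
    by (auto simp: norm_mult intro!: mult_le_one)
  have "(CLINT \<omega>|M. iexp (u * V \<omega>) * \<psi>1 \<omega>) = (CLINT \<omega>|M. iexp (u * V \<omega>) * \<psi>2 \<omega>)" for u
  proof -
    have "(CLINT \<omega>|M. iexp (u * V \<omega>) * \<psi>1 \<omega>) =
        (CLINT \<omega>|M. P \<omega> *\<^sub>R (iexp (u * V \<omega> + Y \<omega>) * iexp (v * Z \<omega>)))"
      unfolding \<psi>1_def iexp_add by (simp add: ac_simps)
    also have "\<dots> = (CLINT \<omega>|M. (P \<omega> *\<^sub>R iexp (u * V \<omega> + Y \<omega>)) * c)"
      unfolding factorizes c_def by (rule integral_mult_left_zero[symmetric])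
    also have "\<dots> = (CLINT \<omega>|M. iexp (u * V \<omega>) * \<psi>2 \<omega>)"
      unfolding \<psi>2_def iexp_add by (simp add: ac_simps)
    finally show ?thesis .
  qed
  then have "(CLINT \<omega>|M. indicator B (V \<omega>) *\<^sub>R \<psi>1 \<omega>) = (CLINT \<omega>|M. indicator B (V \<omega>) *\<^sub>R \<psi>2 \<omega>)"
    by (intro integral_indicator_eq_of_fourier_eq[OF _ _ _ bounded]) simp_all
  then have "(CLINT \<omega>|M. (indicator B (V \<omega>) * P \<omega>) *\<^sub>R (iexp (Y \<omega>) * iexp (v * Z \<omega>))) =
      (CLINT \<omega>|M. ((indicator B (V \<omega>) * P \<omega>) *\<^sub>R iexp (Y \<omega>)) * c)"
    unfolding \<psi>1_def \<psi>2_def by simp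
  then show ?thesis unfolding c_def by (simp only: integral_mult_left_zero)
qed

lemma integral_prod_indicator_factorizes:
  fixes V :: "'i \<Rightarrow> 'a \<Rightarrow> real" and Z :: "'a \<Rightarrow> real"
  assumes "finite I" and [measurable]: "\<And>k. V k \<in> borel_measurable M" "Z \<in> borel_measurable M"
    and factorizes: "\<And>s v. (CLINT \<omega>|M. iexp ((\<Sum>k\<in>I. s k * V k \<omega>) + v * Z \<omega>)) =
        (CLINT \<omega>|M. iexp (\<Sum>k\<in>I. s k * V k \<omega>)) * (CLINT \<omega>|M. iexp (v * Z \<omega>))"
    and [measurable]: "\<And>k. B k \<in> sets borel"
    and "S \<subseteq> I"
  shows "(CLINT \<omega>|M. (\<Prod>k\<in>S. indicator (B k) (V k \<omega>) :: real) *\<^sub>R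
        (iexp (\<Sum>k\<in>I-S. s k * V k \<omega>) * iexp (v * Z \<omega>))) =
      (CLINT \<omega>|M. (\<Prod>k\<in>S. indicator (B k) (V k \<omega>) :: real) *\<^sub>R iexp (\<Sum>k\<in>I-S. s k * V k \<omega>)) *
      (CLINT \<omega>|M. iexp (v * Z \<omega>))"
  using finite_subset[OF \<open>S \<subseteq> I\<close> \<open>finite I\<close>] \<open>S \<subseteq> I\<close>
proof (induction S arbitrary: s rule: finite_subset_induct')
  case empty
  then show ?case using factorizes by (simp only: iexp_add prod.empty scaleR_one Diff_empty)
next
  case (insert j S)
  have sum_eq: "(\<Sum>k\<in>I-S. (s(j:=u)) k * V k \<omega>) = u * V j \<omega> + (\<Sum>k\<in>I - insert j S. s k * V k \<omega>)" for u \<omega>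
  proof -
    define T where "T = I - insert j S"
    have "I - S = insert j T" "j \<notin> T" "finite T"
      using insert \<open>finite I\<close> unfolding T_def by auto
    then show ?thesis unfolding T_def[symmetric] by (simp add: sum.insert) (intro sum.cong; auto)
  qed
  have "(\<Prod>k\<in>insert j S. indicator (B k) (V k \<omega>) :: real) =
      indicator (B j) (V j \<omega>) * (\<Prod>k\<in>S. indicator (B k) (V k \<omega>))" for \<omega>
    using insert by simp
  moreover have "(CLINT \<omega>|M. (indicator (B j) (V j \<omega>) * (\<Prod>k\<in>S. indicator (B k) (V k \<omega>) :: real)) *\<^sub>R
        (iexp (\<Sum>k\<in>I - insert j S. s k * V k \<omega>) * iexp (v * Z \<omega>))) =
      (CLINT \<omega>|M. (indicator (B j) (V j \<omega>) * (\<Prod>k\<in>S. indicator (B k) (V k \<omega>) :: real)) *\<^sub>R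
        iexp (\<Sum>k\<in>I - insert j S. s k * V k \<omega>)) * (CLINT \<omega>|M. iexp (v * Z \<omega>))"
  proof (rule integral_indicator_factorizes[OF _ _ _ _ _ abs_prod_indicator_le_1])
    show "(CLINT \<omega>|M. (\<Prod>k\<in>S. indicator (B k) (V k \<omega>) :: real) *\<^sub>R
          (iexp (u * V j \<omega> + (\<Sum>k\<in>I - insert j S. s k * V k \<omega>)) * iexp (v * Z \<omega>))) =
        (CLINT \<omega>|M. (\<Prod>k\<in>S. indicator (B k) (V k \<omega>) :: real) *\<^sub>R
          iexp (u * V j \<omega> + (\<Sum>k\<in>I - insert j S. s k * V k \<omega>))) * (CLINT \<omega>|M. iexp (v * Z \<omega>))" for u
      using insert.IH[of "s(j:=u)"] insert.hyps(3) unfolding sum_eq by blast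
  qed measurable
  ultimately show ?case by simp
qed

lemma integral_indicator_mult_eq_of_char_factorizes:
  fixes P Z :: "'a \<Rightarrow> real"
  assumes [measurable]: "P \<in> borel_measurable M" "Z \<in> borel_measurable M" "C \<in> sets borel"
    and bounded: "\<And>\<omega>. \<bar>P \<omega>\<bar> \<le> 1"
    and factorizes: "\<And>v. (CLINT \<omega>|M. P \<omega> *\<^sub>R iexp (v * Z \<omega>)) =
      complex_of_real (\<integral>\<omega>. P \<omega> \<partial>M) * (CLINT \<omega>|M. iexp (v * Z \<omega>))"
  shows "(\<integral>\<omega>. indicator C (Z \<omega>) * P \<omega> \<partial>M) = (\<integral>\<omega>. indicator C (Z \<omega>) \<partial>M) * (\<integral>\<omega>. P \<omega> \<partial>M)"
proof -
  define e where "e = (\<integral>\<omega>. P \<omega> \<partial>M)"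
  have "\<bar>e\<bar> \<le> (\<integral>\<omega>. 1 \<partial>M)"
    unfolding e_def using bounded
    by (intro order.trans[OF integral_abs_bound] integral_mono integrable_const_bound[where B=1]) auto
  then have "\<bar>e\<bar> \<le> 1" by (simp add: prob_space)
  have "(CLINT \<omega>|M. iexp (v * Z \<omega>) * complex_of_real (P \<omega>)) =
      (CLINT \<omega>|M. iexp (v * Z \<omega>) * complex_of_real e)" for v
    using factorizes[of v] by (simp add: e_def scaleR_conv_of_real ac_simps)
  then have "(CLINT \<omega>|M. indicator C (Z \<omega>) *\<^sub>R complex_of_real (P \<omega>)) =
      (CLINT \<omega>|M. indicator C (Z \<omega>) *\<^sub>R complex_of_real e)"
    by (intro integral_indicator_eq_of_fourier_eq[where B=1]) (use bounded \<open>\<bar>e\<bar> \<le> 1\<close> in auto)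
  then show ?thesis
    unfolding e_def by (simp add: scaleR_conv_of_real of_real_mult[symmetric] del: of_real_mult)
qed

lemma prob_indep_of_char_factorizes:
  fixes V :: "'i \<Rightarrow> 'a \<Rightarrow> real" and Z :: "'a \<Rightarrow> real"
  assumes "finite I" and [measurable]: "\<And>k. V k \<in> borel_measurable M" "Z \<in> borel_measurable M"
    and factorizes: "\<And>s v. (CLINT \<omega>|M. iexp ((\<Sum>k\<in>I. s k * V k \<omega>) + v * Z \<omega>)) =
        (CLINT \<omega>|M. iexp (\<Sum>k\<in>I. s k * V k \<omega>)) * (CLINT \<omega>|M. iexp (v * Z \<omega>))"
    and [measurable]: "\<And>k. B k \<in> sets borel" "C \<in> sets borel"
  shows "prob {\<omega>\<in>space M. (\<forall>k\<in>I. V k \<omega> \<in> B k) \<and> Z \<omega> \<in> C} =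
     prob {\<omega>\<in>space M. \<forall>k\<in>I. V k \<omega> \<in> B k} * prob {\<omega>\<in>space M. Z \<omega> \<in> C}"
proof -
  define P where "P \<omega> = (\<Prod>k\<in>I. indicator (B k) (V k \<omega>) :: real)" for \<omega>
  have [measurable]: "P \<in> borel_measurable M" unfolding P_def by measurable
  have "(CLINT \<omega>|M. P \<omega> *\<^sub>R (iexp 0 * iexp (v * Z \<omega>))) =
      (CLINT \<omega>|M. P \<omega> *\<^sub>R iexp 0) * (CLINT \<omega>|M. iexp (v * Z \<omega>))" for v
    using integral_prod_indicator_factorizes[OF assms(1-5) subset_refl]
    by (simp only: Diff_cancel sum.empty P_def)
  moreover have "(CLINT \<omega>|M. P \<omega> *\<^sub>R iexp 0) = complex_of_real (\<integral>\<omega>. P \<omega> \<partial>M)"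
    by (simp add: scaleR_conv_of_real)
  moreover have "\<bar>P \<omega>\<bar> \<le> 1" for \<omega> unfolding P_def by (rule abs_prod_indicator_le_1)
  ultimately have independent: "(\<integral>\<omega>. indicator C (Z \<omega>) * P \<omega> \<partial>M) =
      (\<integral>\<omega>. indicator C (Z \<omega>) \<partial>M) * (\<integral>\<omega>. P \<omega> \<partial>M)"
    by (intro integral_indicator_mult_eq_of_char_factorizes) simp_all
  have prob_eq: "prob A = (\<integral>\<omega>. indicator A \<omega> \<partial>M)" if "A \<in> sets M" for A
    using that by simp
  have sets_V: "{\<omega>\<in>space M. \<forall>k\<in>I. V k \<omega> \<in> B k} \<in> sets M"
    using \<open>finite I\<close> by (intro sets.sets_Collect_finite_All) measurable
  then have sets_VZ: "{\<omega>\<in>space M. (\<forall>k\<in>I. V k \<omega> \<in> B k) \<and> Z \<omega> \<in> C} \<in> sets M" by measurable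
  have sets_Z: "{\<omega>\<in>space M. Z \<omega> \<in> C} \<in> sets M" by measurable
  have "prob {\<omega>\<in>space M. (\<forall>k\<in>I. V k \<omega> \<in> B k) \<and> Z \<omega> \<in> C} = (\<integral>\<omega>. indicator C (Z \<omega>) * P \<omega> \<partial>M)"
    unfolding prob_eq[OF sets_VZ] using \<open>finite I\<close>
    by (intro Bochner_Integration.integral_cong) (auto simp: P_def prod_indicator_eq_if split: split_indicator)
  moreover have "prob {\<omega>\<in>space M. \<forall>k\<in>I. V k \<omega> \<in> B k} = (\<integral>\<omega>. P \<omega> \<partial>M)"
    unfolding prob_eq[OF sets_V] using \<open>finite I\<close>
    by (intro Bochner_Integration.integral_cong) (auto simp: P_def prod_indicator_eq_if split: split_indicator)
  moreover have "prob {\<omega>\<in>space M. Z \<omega> \<in> C} = (\<integral>\<omega>. indicator C (Z \<omega>) \<partial>M)"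
    unfolding prob_eq[OF sets_Z] by (intro Bochner_Integration.integral_cong) (auto simp: indicator_def)
  ultimately show ?thesis using independent by simp
qed

end

section \<open>Square-integrable variables and linear combinations of the field\<close>

lemma quadratic_nonneg_imp_sq_le:
  fixes a b c :: real
  assumes nonneg: "\<And>t. 0 \<le> a * t^2 + 2 * b * t + c" and "0 \<le> a"
  shows "b^2 \<le> a * c"
proof (cases "a = 0")
  case True
  have "b = 0"
  proof (rule ccontr)
    assume "b \<noteq> 0"
    then show False using nonneg[of "-(c+1)/(2*b)"] True by (simp add: field_simps)
  qed
  then show ?thesis using True by simp
next
  case False
  then have "a > 0" using \<open>0 \<le> a\<close> by simp
  have "0 \<le> a * (-b/a)^2 + 2 * b * (-b/a) + c" by (rule nonneg)
  also have "\<dots> = c - b^2 / a" using \<open>a > 0\<close> by (simp add: power2_eq_square field_simps)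
  finally show ?thesis using \<open>a > 0\<close> by (simp add: field_simps)
qed

lemma integrable_mult_of_square_integrable:
  fixes X Y :: "'a \<Rightarrow> real"
  assumes [measurable]: "X \<in> borel_measurable M" "Y \<in> borel_measurable M"
    and "integrable M (\<lambda>\<omega>. (X \<omega>)^2)" "integrable M (\<lambda>\<omega>. (Y \<omega>)^2)"
  shows "integrable M (\<lambda>\<omega>. X \<omega> * Y \<omega>)"
proof (rule Bochner_Integration.integrable_bound)
  show "integrable M (\<lambda>\<omega>. (X \<omega>)^2 + (Y \<omega>)^2)" using assms(3,4) by simp
  show "AE \<omega> in M. norm (X \<omega> * Y \<omega>) \<le> norm ((X \<omega>)^2 + (Y \<omega>)^2)"
  proof (intro AE_I2)
    fix \<omega>
    have "2 * \<bar>X \<omega>\<bar> * \<bar>Y \<omega>\<bar> \<le> (X \<omega>)^2 + (Y \<omega>)^2"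
      using sum_squares_bound[of "\<bar>X \<omega>\<bar>" "\<bar>Y \<omega>\<bar>"] by (simp add: power2_eq_square)
    moreover have "0 \<le> \<bar>X \<omega>\<bar> * \<bar>Y \<omega>\<bar>" by simp
    ultimately have "\<bar>X \<omega>\<bar> * \<bar>Y \<omega>\<bar> \<le> (X \<omega>)^2 + (Y \<omega>)^2" by linarith
    then show "norm (X \<omega> * Y \<omega>) \<le> norm ((X \<omega>)^2 + (Y \<omega>)^2)"
      by (simp add: abs_mult)
  qed
qed simp

lemma integral_square_affine:
  fixes X Y :: "'a \<Rightarrow> real"
  assumes [measurable]: "X \<in> borel_measurable M" "Y \<in> borel_measurable M"
    and X2: "integrable M (\<lambda>\<omega>. (X \<omega>)^2)" and Y2: "integrable M (\<lambda>\<omega>. (Y \<omega>)^2)"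
  shows "(\<integral>\<omega>. (t * X \<omega> + Y \<omega>)^2 \<partial>M) =
    (\<integral>\<omega>. (X \<omega>)^2 \<partial>M) * t^2 + 2 * (\<integral>\<omega>. X \<omega> * Y \<omega> \<partial>M) * t + (\<integral>\<omega>. (Y \<omega>)^2 \<partial>M)"
proof -
  have "(\<lambda>\<omega>. (t * X \<omega> + Y \<omega>)^2) = (\<lambda>\<omega>. t^2 * (X \<omega>)^2 + (2 * t * (X \<omega> * Y \<omega>) + (Y \<omega>)^2))"
    by (simp add: power2_eq_square algebra_simps)
  moreover have "integrable M (\<lambda>\<omega>. 2 * t * (X \<omega> * Y \<omega>))"
    using integrable_mult_of_square_integrable[OF assms] by simp
  ultimately have "(\<integral>\<omega>. (t * X \<omega> + Y \<omega>)^2 \<partial>M) =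
      (\<integral>\<omega>. t^2 * (X \<omega>)^2 \<partial>M) + ((\<integral>\<omega>. 2 * t * (X \<omega> * Y \<omega>) \<partial>M) + (\<integral>\<omega>. (Y \<omega>)^2 \<partial>M))"
    using X2 Y2 by (simp add: Bochner_Integration.integral_add)
  then show ?thesis by (simp only: integral_mult_right_zero) (simp add: algebra_simps)
qed

lemma Cauchy_Schwarz_integral:
  fixes X Y :: "'a \<Rightarrow> real"
  assumes [measurable]: "X \<in> borel_measurable M" "Y \<in> borel_measurable M"
    and "integrable M (\<lambda>\<omega>. (X \<omega>)^2)" "integrable M (\<lambda>\<omega>. (Y \<omega>)^2)"
  shows "\<bar>\<integral>\<omega>. X \<omega> * Y \<omega> \<partial>M\<bar> \<le> sqrt ((\<integral>\<omega>. (X \<omega>)^2 \<partial>M) * (\<integral>\<omega>. (Y \<omega>)^2 \<partial>M))"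
proof -
  have "(\<integral>\<omega>. X \<omega> * Y \<omega> \<partial>M)^2 \<le> (\<integral>\<omega>. (X \<omega>)^2 \<partial>M) * (\<integral>\<omega>. (Y \<omega>)^2 \<partial>M)"
  proof (rule quadratic_nonneg_imp_sq_le)
    show "0 \<le> (\<integral>\<omega>. (X \<omega>)^2 \<partial>M) * t^2 + 2 * (\<integral>\<omega>. X \<omega> * Y \<omega> \<partial>M) * t + (\<integral>\<omega>. (Y \<omega>)^2 \<partial>M)" for t
      unfolding integral_square_affine[OF assms, symmetric] by simp
  qed simp
  then show ?thesis by (metis real_sqrt_abs real_sqrt_le_mono)
qed

definition lincomb_of :: "('w \<Rightarrow> 'b \<Rightarrow> real) \<Rightarrow> ('w \<Rightarrow> real) \<Rightarrow> bool" where
  "lincomb_of W X \<longleftrightarrow> (\<exists>F c. finite F \<and> (\<forall>\<omega>. X \<omega> = (\<Sum>x\<in>F. c x * W \<omega> x)))"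

lemma lincomb_ofI: "finite F \<Longrightarrow> lincomb_of W (\<lambda>\<omega>. \<Sum>x\<in>F. c x * W \<omega> x)"
  unfolding lincomb_of_def by blast

lemma lincomb_of_value: "lincomb_of W (\<lambda>\<omega>. W \<omega> x)"
  using lincomb_ofI[of "{x}" W "\<lambda>_. 1"] by simp

lemma lincomb_of_scale:
  assumes "lincomb_of W X"
  shows "lincomb_of W (\<lambda>\<omega>. a * X \<omega>)"
proof -
  obtain F c where "finite F" and X: "\<And>\<omega>. X \<omega> = (\<Sum>x\<in>F. c x * W \<omega> x)"
    using assms unfolding lincomb_of_def by blast
  then show ?thesis
    using lincomb_ofI[of F W "\<lambda>x. a * c x"] by (simp add: X sum_distrib_left mult.assoc)
qed

lemma lincomb_of_add:
  assumes "lincomb_of W X" "lincomb_of W Y"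
  shows "lincomb_of W (\<lambda>\<omega>. X \<omega> + Y \<omega>)"
proof -
  obtain F c G d where "finite F" "finite G"
    and X: "\<And>\<omega>. X \<omega> = (\<Sum>x\<in>F. c x * W \<omega> x)" and Y: "\<And>\<omega>. Y \<omega> = (\<Sum>x\<in>G. d x * W \<omega> x)"
    using assms unfolding lincomb_of_def by blast
  define e where "e x = (if x \<in> F then c x else 0) + (if x \<in> G then d x else 0)" for x
  have "(\<Sum>x\<in>F. c x * W \<omega> x) = (\<Sum>x\<in>F \<union> G. (if x \<in> F then c x else 0) * W \<omega> x)"
    and "(\<Sum>x\<in>G. d x * W \<omega> x) = (\<Sum>x\<in>F \<union> G. (if x \<in> G then d x else 0) * W \<omega> x)" for \<omega>
    using \<open>finite F\<close> \<open>finite G\<close> by (auto intro!: sum.mono_neutral_cong_left)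
  then have "X \<omega> + Y \<omega> = (\<Sum>x\<in>F \<union> G. e x * W \<omega> x)" for \<omega>
    unfolding X Y e_def by (simp add: distrib_right sum.distrib)
  then show ?thesis using \<open>finite F\<close> \<open>finite G\<close> unfolding lincomb_of_def by blast
qed

lemma lincomb_of_diff: "lincomb_of W X \<Longrightarrow> lincomb_of W Y \<Longrightarrow> lincomb_of W (\<lambda>\<omega>. X \<omega> - Y \<omega>)"
  using lincomb_of_add[OF _ lincomb_of_scale[of W Y "-1"], of X] by simp

locale gaussian_field = prob_space M for M :: "'w measure" +
  fixes W :: "'w \<Rightarrow> 'b \<Rightarrow> real"
  assumes gaussian: "centered_gaussian_field M W"
begin

lemma centered_gaussian_rv_lincomb:
  assumes "lincomb_of W X"
  shows "centered_gaussian_rv M X"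
proof -
  obtain F c where "finite F" and "\<And>\<omega>. X \<omega> = (\<Sum>x\<in>F. c x * W \<omega> x)"
    using assms unfolding lincomb_of_def by blast
  then have "X = (\<lambda>\<omega>. \<Sum>x\<in>F. c x * W \<omega> x)" by auto
  then show ?thesis using gaussian \<open>finite F\<close> unfolding centered_gaussian_field_def by simp
qed

lemma measurable_lincomb [measurable (raw)]: "lincomb_of W X \<Longrightarrow> X \<in> borel_measurable M"
  using centered_gaussian_rv_lincomb unfolding centered_gaussian_rv_def by blast

lemma measurable_value [measurable]: "(\<lambda>\<omega>. W \<omega> x) \<in> borel_measurable M"
  by (rule measurable_lincomb[OF lincomb_of_value])

lemma integrable_square_lincomb: "lincomb_of W X \<Longrightarrow> integrable M (\<lambda>\<omega>. (X \<omega>)^2)"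
  using centered_gaussian_rv_gaussian_char(1)[OF prob_space_axioms centered_gaussian_rv_lincomb] .

lemma gaussian_char_lincomb: "lincomb_of W X \<Longrightarrow> gaussian_char M X (\<integral>\<omega>. (X \<omega>)^2 \<partial>M)"
  using centered_gaussian_rv_gaussian_char(2)[OF prob_space_axioms centered_gaussian_rv_lincomb] .

lemma integrable_mult_lincomb:
  "lincomb_of W X \<Longrightarrow> lincomb_of W Y \<Longrightarrow> integrable M (\<lambda>\<omega>. X \<omega> * Y \<omega>)"
  by (intro integrable_mult_of_square_integrable integrable_square_lincomb measurable_lincomb)

lemma Cauchy_Schwarz_lincomb:
  "lincomb_of W X \<Longrightarrow> lincomb_of W Y \<Longrightarrow>
    \<bar>\<integral>\<omega>. X \<omega> * Y \<omega> \<partial>M\<bar> \<le> sqrt ((\<integral>\<omega>. (X \<omega>)^2 \<partial>M) * (\<integral>\<omega>. (Y \<omega>)^2 \<partial>M))"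
  by (intro Cauchy_Schwarz_integral integrable_square_lincomb measurable_lincomb)

end

lemma continuous_on_compact_abs_bound:
  fixes f :: "'a::metric_space \<Rightarrow> real"
  assumes "continuous_on S f" "compact S"
  obtains B where "\<And>z. z \<in> S \<Longrightarrow> \<bar>f z\<bar> \<le> B"
proof -
  have "bounded (f ` S)" using assms by (intro compact_imp_bounded compact_continuous_image)
  then show ?thesis using that unfolding bounded_real by blast
qed

locale continuous_gaussian_field = gaussian_field M W
  for M :: "'w measure" and W :: "'w \<Rightarrow> 'b::metric_space \<Rightarrow> real" +
  fixes N :: "'w set"
  assumes null_N: "N \<in> null_sets M"
    and continuous_off_N: "\<omega> \<in> space M - N \<Longrightarrow> continuous_on UNIV (W \<omega>)"
begin

definition field_var :: "'b \<Rightarrow> real" where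
  "field_var x = (\<integral>\<omega>. (W \<omega> x)^2 \<partial>M)"

definition field_cov :: "'b \<Rightarrow> 'b \<Rightarrow> real" where
  "field_cov x y = (\<integral>\<omega>. W \<omega> x * W \<omega> y \<partial>M)"

lemma sets_N [measurable]: "N \<in> sets M"
  using null_N by auto

lemma AE_not_in_N: "AE \<omega> in M. \<omega> \<notin> N"
  using null_N by (rule AE_not_in)

lemma field_var_nonneg: "0 \<le> field_var x"
  unfolding field_var_def by (rule integral_nonneg_AE) auto

lemma value_LIMSEQ_AE:
  assumes "z \<longlonglongrightarrow> y"
  shows "AE \<omega> in M. (\<lambda>n. W \<omega> (z n)) \<longlonglongrightarrow> W \<omega> y"
  using AE_not_in_N
proof (rule AE_mp, intro AE_I2 impI)
  fix \<omega> assume "\<omega> \<in> space M" "\<omega> \<notin> N"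
  then show "(\<lambda>n. W \<omega> (z n)) \<longlonglongrightarrow> W \<omega> y"
    using continuous_off_N by (intro continuous_on_tendsto_compose[OF _ assms]) auto
qed

lemma field_var_LIMSEQ:
  assumes "z \<longlonglongrightarrow> y"
  shows "(\<lambda>n. field_var (z n)) \<longlonglongrightarrow> field_var y"
proof -
  have "\<exists>w. (\<lambda>n. field_var (z n)) \<longlonglongrightarrow> w \<and> gaussian_char M (\<lambda>\<omega>. W \<omega> y) w"
    by (rule gaussian_char_LIMSEQ[OF _ _ value_LIMSEQ_AE[OF assms]])
      (auto simp: field_var_def intro!: gaussian_char_lincomb lincomb_of_value)
  then obtain w where "(\<lambda>n. field_var (z n)) \<longlonglongrightarrow> w" "gaussian_char M (\<lambda>\<omega>. W \<omega> y) w"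
    by blast
  moreover have "gaussian_char M (\<lambda>\<omega>. W \<omega> y) (field_var y)"
    unfolding field_var_def by (intro gaussian_char_lincomb lincomb_of_value)
  ultimately show ?thesis using gaussian_char_variance_unique by blast
qed

lemma field_var_bounded_on_compact:
  assumes "compact S"
  obtains B where "\<And>z. z \<in> S \<Longrightarrow> field_var z \<le> B"
proof -
  have "continuous_on S field_var"
    by (rule continuous_on_sequentiallyI) (rule field_var_LIMSEQ)
  then obtain B where "\<And>z. z \<in> S \<Longrightarrow> \<bar>field_var z\<bar> \<le> B"
    using continuous_on_compact_abs_bound assms by blast
  then show ?thesis using that abs_le_D1 by blast
qed

lemma integral_square_increment_LIMSEQ:
  assumes "z \<longlonglongrightarrow> y"
  shows "(\<lambda>n. \<integral>\<omega>. (W \<omega> (z n) - W \<omega> y)^2 \<partial>M) \<longlonglongrightarrow> 0"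
proof -
  have "AE \<omega> in M. (\<lambda>n. W \<omega> (z n) - W \<omega> y) \<longlonglongrightarrow> 0"
    using value_LIMSEQ_AE[OF assms] by eventually_elim (simp add: LIM_zero)
  moreover have "gaussian_char M (\<lambda>\<omega>. W \<omega> (z n) - W \<omega> y) (\<integral>\<omega>. (W \<omega> (z n) - W \<omega> y)^2 \<partial>M)" for n
    by (intro gaussian_char_lincomb lincomb_of_diff lincomb_of_value)
  ultimately have "\<exists>w. (\<lambda>n. \<integral>\<omega>. (W \<omega> (z n) - W \<omega> y)^2 \<partial>M) \<longlonglongrightarrow> w \<and> gaussian_char M (\<lambda>\<omega>. 0) w"
    by (intro gaussian_char_LIMSEQ) auto
  then obtain w where "(\<lambda>n. \<integral>\<omega>. (W \<omega> (z n) - W \<omega> y)^2 \<partial>M) \<longlonglongrightarrow> w" "gaussian_char M (\<lambda>\<omega>. 0) w"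
    by blast
  moreover have "w = 0"
    using gaussian_char_variance_unique[OF \<open>gaussian_char M (\<lambda>\<omega>. 0) w\<close> gaussian_char_zero] .
  ultimately show ?thesis by simp
qed

lemma abs_field_cov_le: "\<bar>field_cov x y\<bar> \<le> sqrt (field_var x * field_var y)"
  unfolding field_cov_def field_var_def by (intro Cauchy_Schwarz_lincomb lincomb_of_value)

lemma field_cov_LIMSEQ:
  assumes "z \<longlonglongrightarrow> y"
  shows "(\<lambda>n. field_cov x (z n)) \<longlonglongrightarrow> field_cov x y"
proof -
  define d where "d n = (\<integral>\<omega>. (W \<omega> (z n) - W \<omega> y)^2 \<partial>M)" for n
  have bound: "norm (field_cov x (z n) - field_cov x y) \<le> sqrt (field_var x * d n)" for n
  proof -
    have "field_cov x (z n) - field_cov x y = (\<integral>\<omega>. W \<omega> x * (W \<omega> (z n) - W \<omega> y) \<partial>M)"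
      unfolding field_cov_def right_diff_distrib
      by (rule Bochner_Integration.integral_diff[symmetric]) (intro integrable_mult_lincomb lincomb_of_value)+
    also have "\<bar>\<dots>\<bar> \<le> sqrt (field_var x * d n)"
      unfolding field_var_def d_def by (intro Cauchy_Schwarz_lincomb lincomb_of_value lincomb_of_diff)
    finally show ?thesis by simp
  qed
  have "(\<lambda>n. sqrt (field_var x * d n)) \<longlonglongrightarrow> 0"
    using tendsto_real_sqrt[OF tendsto_mult_right_zero[OF integral_square_increment_LIMSEQ[OF assms]]]
    unfolding d_def by simp
  then have "(\<lambda>n. field_cov x (z n) - field_cov x y) \<longlonglongrightarrow> 0"
    by (rule Lim_null_comparison[rotated]) (use bound in \<open>simp add: always_eventually\<close>)
  then show ?thesis by (simp add: Lim_null[symmetric])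
qed

lemma continuous_field_cov: "continuous_on UNIV (field_cov x)"
  by (rule continuous_on_sequentiallyI) (rule field_cov_LIMSEQ)

end

section \<open>Riemann sums over a lattice\<close>

lemma vec_lambda_measurable:
  fixes F :: "'d::finite \<Rightarrow> 'a \<Rightarrow> real"
  assumes [measurable]: "\<And>i. F i \<in> borel_measurable M"
  shows "(\<lambda>y. (\<chi> i. F i y) :: real^'d) \<in> borel_measurable M"
proof -
  have "(\<lambda>y. (\<chi> i. F i y) :: real^'d) = (\<lambda>y. \<Sum>i\<in>UNIV. F i y *\<^sub>R axis i 1)"
  proof
    fix y
    show "(\<chi> i. F i y) = (\<Sum>i\<in>UNIV. F i y *\<^sub>R axis i 1)"
      using basis_expansion[of "(\<chi> i. F i y) :: real^'d"] by (simp add: scalar_mult_eq_scaleR)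
  qed
  then show ?thesis by simp
qed

lemma vec_nth_measurable [measurable]: "(\<lambda>y::real^'d. y $ i) \<in> borel_measurable borel"
  by (intro borel_measurable_continuous_onI continuous_intros)

definition grid :: "nat \<Rightarrow> real^'d \<Rightarrow> real^'d" where
  "grid n y = (\<chi> i. real_of_int \<lfloor>real (Suc n) * y$i\<rfloor> / real (Suc n))"

lemma measurable_grid [measurable]: "grid n \<in> borel_measurable borel"
  unfolding grid_def by (rule vec_lambda_measurable) measurable

lemma abs_floor_scaled_diff_le:
  "\<bar>real_of_int \<lfloor>real (Suc n) * t\<rfloor> / real (Suc n) - t\<bar> \<le> 1 / real (Suc n)"
proof -
  define N where "N = real (Suc n)"
  have "N > 0" unfolding N_def by simp
  have "\<bar>real_of_int \<lfloor>N * t\<rfloor> - N * t\<bar> \<le> 1" by linarith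
  moreover have "real_of_int \<lfloor>N * t\<rfloor> / N - t = (real_of_int \<lfloor>N * t\<rfloor> - N * t) / N"
    using \<open>N > 0\<close> by (simp add: diff_divide_distrib)
  ultimately show ?thesis
    using \<open>N > 0\<close> unfolding N_def[symmetric] by (simp add: abs_divide divide_right_mono)
qed

lemma norm_grid_diff_le: "norm (grid n y - (y :: real^'d)) \<le> real CARD('d) / real (Suc n)"
proof -
  have "norm (grid n y - y) \<le> (\<Sum>i\<in>UNIV. \<bar>(grid n y - y) $ i\<bar>)" by (rule norm_le_l1_cart)
  also have "\<dots> \<le> (\<Sum>i\<in>(UNIV::'d set). 1 / real (Suc n))"
    using abs_floor_scaled_diff_le unfolding grid_def by (intro sum_mono) simp
  finally show ?thesis by simp
qed

lemma grid_LIMSEQ: "(\<lambda>n. grid n y) \<longlonglongrightarrow> (y :: real^'d)"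
proof -
  have "(\<lambda>n. real CARD('d) * (1 / real (Suc n))) \<longlonglongrightarrow> 0"
    using tendsto_mult_right_zero[OF LIMSEQ_Suc[OF lim_inverse_n']] by simp
  then have "(\<lambda>n. grid n y - y) \<longlonglongrightarrow> 0"
    by (rule Lim_null_comparison[rotated]) (use norm_grid_diff_le[of _ y] in \<open>simp add: always_eventually\<close>)
  then show ?thesis by (simp add: Lim_null[symmetric])
qed

lemma finite_grid_image:
  assumes "bounded (D :: (real^'d) set)"
  shows "finite (grid n ` D)"
proof -
  obtain R where R: "\<And>y. y \<in> D \<Longrightarrow> norm y \<le> R" using assms unfolding bounded_iff by blast
  define m where "m = \<lceil>real (Suc n) * R\<rceil>"
  define S where "S = (\<lambda>k. (\<chi> i. real_of_int (k i) / real (Suc n)) :: real^'d) ` (\<Pi>\<^sub>E i\<in>(UNIV::'d set). {-m..m})"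
  have "finite S" unfolding S_def by (intro finite_imageI finite_PiE) auto
  moreover have "grid n ` D \<subseteq> S"
  proof
    fix g assume "g \<in> grid n ` D"
    then obtain y where y: "y \<in> D" "g = grid n y" by blast
    define k where "k i = \<lfloor>real (Suc n) * y$i\<rfloor>" for i
    have "k i \<in> {-m..m}" for i
    proof -
      have "\<bar>y $ i\<bar> \<le> R" using component_le_norm_cart[of y i] R[OF y(1)] by linarith
      then have "\<bar>real (Suc n) * y$i\<bar> \<le> real (Suc n) * R" by (simp add: abs_mult)
      moreover have "real_of_int m \<ge> real (Suc n) * R" unfolding m_def by linarith
      ultimately have "\<bar>real (Suc n) * y$i\<bar> \<le> real_of_int m" by linarith
      then show ?thesis unfolding k_def by (auto simp: floor_le_iff le_floor_iff abs_le_iff)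
    qed
    moreover have "g = (\<chi> i. real_of_int (k i) / real (Suc n))" unfolding y(2) grid_def k_def by simp
    ultimately show "g \<in> S" unfolding S_def by auto
  qed
  ultimately show ?thesis by (rule finite_subset[rotated])
qed

lemma integral_grid_eq_sum:
  fixes D :: "(real^'d) set" and f :: "real^'d \<Rightarrow> real"
  assumes D: "D \<in> sets lborel" "bounded D"
  shows "(LINT y:D|lborel. f (grid n y)) = (\<Sum>g\<in>grid n ` D. measure lborel (D \<inter> grid n -` {g}) * f g)"
proof -
  define \<Gamma> where "\<Gamma> = grid n ` D"
  have "finite \<Gamma>" unfolding \<Gamma>_def by (rule finite_grid_image[OF D(2)])
  have sets: "D \<inter> grid n -` {g} \<in> sets lborel" for g
  proof -
    have "grid n -` {g} \<inter> space borel \<in> sets borel" by (rule measurable_sets[OF measurable_grid]) simp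
    then show ?thesis using D(1) by simp
  qed
  have finite_measure: "emeasure lborel (D \<inter> grid n -` {g}) < \<infinity>" for g
    using emeasure_bounded_finite[of "D \<inter> grid n -` {g}"] D(2) bounded_subset by blast
  have "indicator D y * f (grid n y) = (\<Sum>g\<in>\<Gamma>. indicator (D \<inter> grid n -` {g}) y * f g)" for y
  proof (cases "y \<in> D")
    case True
    then have "(\<Sum>g\<in>\<Gamma>. indicator (D \<inter> grid n -` {g}) y * f g) = (\<Sum>g\<in>\<Gamma>. if g = grid n y then f g else 0)"
      by (intro sum.cong) (auto simp: indicator_def)
    also have "\<dots> = f (grid n y)" using \<open>finite \<Gamma>\<close> True unfolding \<Gamma>_def by simp
    finally show ?thesis using True by simp
  qed (simp add: indicator_def)
  then have "(LINT y:D|lborel. f (grid n y)) = (\<integral>y. (\<Sum>g\<in>\<Gamma>. indicator (D \<inter> grid n -` {g}) y * f g) \<partial>lborel)"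
    unfolding set_lebesgue_integral_def by simp
  also have "\<dots> = (\<Sum>g\<in>\<Gamma>. (\<integral>y. indicator (D \<inter> grid n -` {g}) y * f g \<partial>lborel))"
    by (rule Bochner_Integration.integral_sum) (auto intro!: integrable_real_indicator sets finite_measure)
  also have "\<dots> = (\<Sum>g\<in>\<Gamma>. measure lborel (D \<inter> grid n -` {g}) * f g)"
    using sets finite_measure by (intro sum.cong) (auto simp: measure_def)
  finally show ?thesis unfolding \<Gamma>_def .
qed

definition grid_hull :: "(real^'d) set \<Rightarrow> (real^'d) set" where
  "grid_hull D = closure (\<Union>y\<in>D. cball y (real CARD('d)))"

lemma
  fixes D :: "(real^'d) set"
  assumes "y \<in> D"
  shows grid_in_grid_hull: "grid n y \<in> grid_hull D"
    and point_in_grid_hull: "y \<in> grid_hull D"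
proof -
  have "real CARD('d) / real (Suc n) \<le> real CARD('d)" by (simp add: divide_le_eq)
  then have "dist y (grid n y) \<le> real CARD('d)"
    using norm_grid_diff_le[of n y] by (simp add: dist_norm norm_minus_commute)
  then show "grid n y \<in> grid_hull D" "y \<in> grid_hull D"
    using \<open>y \<in> D\<close> closure_subset unfolding grid_hull_def by fastforce+
qed

lemma compact_grid_hull:
  fixes D :: "(real^'d) set"
  assumes "bounded D"
  shows "compact (grid_hull D)"
proof -
  obtain R where R: "\<And>y. y \<in> D \<Longrightarrow> norm y \<le> R" using assms unfolding bounded_iff by blast
  have "norm x \<le> R + real CARD('d)" if "y \<in> D" "norm (y - x) \<le> real CARD('d)" for x y
    using norm_triangle_sub[of x y] norm_minus_commute[of x y] R[OF that(1)] that(2) by linarith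
  then have "(\<Union>y\<in>D. cball y (real CARD('d))) \<subseteq> cball 0 (R + real CARD('d))"
    by (auto simp: dist_norm)
  then show ?thesis
    unfolding grid_hull_def by (meson bounded_cball bounded_subset compact_closure)
qed

section \<open>The integral of the field over a bounded domain\<close>

lemma (in gaussian_field) integral_sum_mult_lincomb:
  assumes "lincomb_of W Y" "finite S"
  shows "(\<integral>\<omega>. (\<Sum>x\<in>S. c x * W \<omega> x) * Y \<omega> \<partial>M) = (\<Sum>x\<in>S. c x * (\<integral>\<omega>. W \<omega> x * Y \<omega> \<partial>M))"
proof -
  have "(\<integral>\<omega>. (\<Sum>x\<in>S. c x * W \<omega> x) * Y \<omega> \<partial>M) = (\<integral>\<omega>. (\<Sum>x\<in>S. c x * (W \<omega> x * Y \<omega>)) \<partial>M)"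
    by (simp only: sum_distrib_right mult.assoc)
  also have "\<dots> = (\<Sum>x\<in>S. (\<integral>\<omega>. c x * (W \<omega> x * Y \<omega>) \<partial>M))"
    using assms by (intro Bochner_Integration.integral_sum integrable_mult_right integrable_mult_lincomb lincomb_of_value)
  finally show ?thesis by simp
qed

locale gaussian_field_on_domain = continuous_gaussian_field M W N
  for M :: "'w measure" and W :: "'w \<Rightarrow> real^'d \<Rightarrow> real" and N +
  fixes D :: "(real^'d) set"
  assumes sets_D: "D \<in> sets lborel" and bounded_D: "bounded D"
begin

definition riemann_sum :: "nat \<Rightarrow> 'w \<Rightarrow> real" where
  "riemann_sum n \<omega> = (\<Sum>g\<in>grid n ` D. measure lborel (D \<inter> grid n -` {g}) * W \<omega> g)"

text \<open>Off the null set \<open>N\<close> the paths are continuous; on \<open>N\<close> the value \<open>0\<close> is arbitrary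
  and only serves to make \<open>field_integral\<close> measurable.\<close>
definition field_integral :: "'w \<Rightarrow> real" where
  "field_integral \<omega> = (if \<omega> \<in> N then 0 else LINT y:D|lborel. W \<omega> y)"

definition cross_cov :: "real^'d \<Rightarrow> real" where
  "cross_cov x = (LINT y:D|lborel. field_cov x y)"

lemma lincomb_riemann_sum: "lincomb_of W (riemann_sum n)"
  unfolding riemann_sum_def[abs_def] by (intro lincomb_ofI finite_grid_image bounded_D)

lemma measurable_riemann_sum [measurable]: "riemann_sum n \<in> borel_measurable M"
  by (rule measurable_lincomb[OF lincomb_riemann_sum])

lemma riemann_sum_eq_integral: "riemann_sum n \<omega> = (LINT y:D|lborel. W \<omega> (grid n y))"
  unfolding riemann_sum_def by (rule integral_grid_eq_sum[OF sets_D bounded_D, symmetric])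

lemma riemann_sum_LIMSEQ:
  assumes "\<omega> \<in> space M" "\<omega> \<notin> N"
  shows "(\<lambda>n. riemann_sum n \<omega>) \<longlonglongrightarrow> field_integral \<omega>"
proof -
  have cont: "continuous_on UNIV (W \<omega>)" using assms continuous_off_N by blast
  then have [measurable]: "W \<omega> \<in> borel_measurable borel" by (rule borel_measurable_continuous_onI)
  obtain B where B: "\<And>z. z \<in> grid_hull D \<Longrightarrow> \<bar>W \<omega> z\<bar> \<le> B"
    using continuous_on_compact_abs_bound[OF continuous_on_subset[OF cont subset_UNIV] compact_grid_hull[OF bounded_D]]
    by blast
  have [measurable]: "D \<in> sets borel" using sets_D by simp
  have "(\<lambda>n. \<integral>y. indicator D y * W \<omega> (grid n y) \<partial>lborel) \<longlonglongrightarrow> (\<integral>y. indicator D y * W \<omega> y \<partial>lborel)"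
  proof (rule integral_dominated_convergence[where w="\<lambda>y. indicator D y * B"])
    show "integrable lborel (\<lambda>y. indicator D y * B)"
      using emeasure_bounded_finite[OF bounded_D] sets_D
      by (intro integrable_mult_left integrable_real_indicator) auto
    show "AE y in lborel. (\<lambda>n. indicator D y * W \<omega> (grid n y)) \<longlonglongrightarrow> indicator D y * W \<omega> y"
      by (intro AE_I2 tendsto_mult_left continuous_on_tendsto_compose[OF cont grid_LIMSEQ]) auto
    show "AE y in lborel. norm (indicator D y * W \<omega> (grid n y)) \<le> indicator D y * B" for n
      by (intro AE_I2) (auto simp: indicator_def intro: B grid_in_grid_hull)
  qed auto
  then show ?thesis
    using assms unfolding riemann_sum_eq_integral field_integral_def set_lebesgue_integral_def by simp
qed

lemma riemann_sum_LIMSEQ_AE: "AE \<omega> in M. (\<lambda>n. riemann_sum n \<omega>) \<longlonglongrightarrow> field_integral \<omega>"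
  using AE_not_in_N by (rule AE_mp) (auto intro!: AE_I2 riemann_sum_LIMSEQ)

lemma measurable_field_integral [measurable]: "field_integral \<in> borel_measurable M"
proof (rule borel_measurable_LIMSEQ_real)
  show "(\<lambda>n. if \<omega> \<in> N then 0 else riemann_sum n \<omega>) \<longlonglongrightarrow> field_integral \<omega>" if "\<omega> \<in> space M" for \<omega>
    using riemann_sum_LIMSEQ[OF that] by (cases "\<omega> \<in> N") (auto simp: field_integral_def)
qed measurable

definition field_integral_var :: real where
  "field_integral_var = lim (\<lambda>n. \<integral>\<omega>. (riemann_sum n \<omega>)^2 \<partial>M)"

lemma field_integral_var_LIMSEQ: "(\<lambda>n. \<integral>\<omega>. (riemann_sum n \<omega>)^2 \<partial>M) \<longlonglongrightarrow> field_integral_var"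
  and gaussian_char_field_integral: "gaussian_char M field_integral field_integral_var"
proof -
  have "\<exists>w. (\<lambda>n. \<integral>\<omega>. (riemann_sum n \<omega>)^2 \<partial>M) \<longlonglongrightarrow> w \<and> gaussian_char M field_integral w"
    by (rule gaussian_char_LIMSEQ[OF _ _ riemann_sum_LIMSEQ_AE])
      (auto intro!: gaussian_char_lincomb lincomb_riemann_sum)
  then show "(\<lambda>n. \<integral>\<omega>. (riemann_sum n \<omega>)^2 \<partial>M) \<longlonglongrightarrow> field_integral_var"
    "gaussian_char M field_integral field_integral_var"
    unfolding field_integral_var_def using limI by blast+
qed

lemma field_integral_var_nonneg: "0 \<le> field_integral_var"
  using gaussian_char_field_integral unfolding gaussian_char_def by simp

lemma integral_value_mult_riemann_sum:
  "(\<integral>\<omega>. W \<omega> x * riemann_sum n \<omega> \<partial>M) = (LINT y:D|lborel. field_cov x (grid n y))"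
proof -
  have "(\<integral>\<omega>. W \<omega> x * riemann_sum n \<omega> \<partial>M) = (\<integral>\<omega>. riemann_sum n \<omega> * W \<omega> x \<partial>M)"
    by (simp add: mult.commute)
  also have "\<dots> = (\<Sum>g\<in>grid n ` D. measure lborel (D \<inter> grid n -` {g}) * field_cov x g)"
    unfolding riemann_sum_def field_cov_def
    by (subst integral_sum_mult_lincomb[OF lincomb_of_value finite_grid_image[OF bounded_D]])
      (simp add: mult.commute)
  also have "\<dots> = (LINT y:D|lborel. field_cov x (grid n y))"
    by (rule integral_grid_eq_sum[OF sets_D bounded_D, symmetric])
  finally show ?thesis .
qed

lemma cov_riemann_sum_LIMSEQ: "(\<lambda>n. \<integral>\<omega>. W \<omega> x * riemann_sum n \<omega> \<partial>M) \<longlonglongrightarrow> cross_cov x"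
proof -
  have [measurable]: "field_cov x \<in> borel_measurable borel"
    by (rule borel_measurable_continuous_onI[OF continuous_field_cov])
  have [measurable]: "D \<in> sets borel" using sets_D by simp
  obtain V where V: "\<And>z. z \<in> grid_hull D \<Longrightarrow> field_var z \<le> V"
    using field_var_bounded_on_compact[OF compact_grid_hull[OF bounded_D]] by blast
  define B where "B = sqrt (field_var x * V)"
  have "(\<lambda>n. \<integral>y. indicator D y * field_cov x (grid n y) \<partial>lborel) \<longlonglongrightarrow> (\<integral>y. indicator D y * field_cov x y \<partial>lborel)"
  proof (rule integral_dominated_convergence[where w="\<lambda>y. indicator D y * B"])
    show "integrable lborel (\<lambda>y. indicator D y * B)"
      using emeasure_bounded_finite[OF bounded_D] sets_D
      by (intro integrable_mult_left integrable_real_indicator) auto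
    show "AE y in lborel. (\<lambda>n. indicator D y * field_cov x (grid n y)) \<longlonglongrightarrow> indicator D y * field_cov x y"
      by (intro AE_I2 tendsto_mult_left field_cov_LIMSEQ grid_LIMSEQ)
    have "\<bar>field_cov x (grid n y)\<bar> \<le> B" if "y \<in> D" for n y
    proof -
      have "\<bar>field_cov x (grid n y)\<bar> \<le> sqrt (field_var x * field_var (grid n y))" by (rule abs_field_cov_le)
      also have "\<dots> \<le> B" unfolding B_def
        using V[OF grid_in_grid_hull[OF that]] field_var_nonneg[of x]
        by (intro real_sqrt_le_mono mult_left_mono)
      finally show ?thesis .
    qed
    then show "AE y in lborel. norm (indicator D y * field_cov x (grid n y)) \<le> indicator D y * B" for n
      by (intro AE_I2) (simp add: indicator_def)
  qed auto
  then show ?thesis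
    unfolding integral_value_mult_riemann_sum cross_cov_def set_lebesgue_integral_def by simp
qed

lemma abs_cross_cov_le: "\<bar>cross_cov x\<bar> \<le> sqrt (field_var x * field_integral_var)"
proof (rule tendsto_le[OF trivial_limit_sequentially])
  show "(\<lambda>n. \<bar>\<integral>\<omega>. W \<omega> x * riemann_sum n \<omega> \<partial>M\<bar>) \<longlonglongrightarrow> \<bar>cross_cov x\<bar>"
    by (intro tendsto_intros cov_riemann_sum_LIMSEQ)
  show "(\<lambda>n. sqrt (field_var x * (\<integral>\<omega>. (riemann_sum n \<omega>)^2 \<partial>M))) \<longlonglongrightarrow> sqrt (field_var x * field_integral_var)"
    by (intro tendsto_intros field_integral_var_LIMSEQ)
  show "\<forall>\<^sub>F n in sequentially. \<bar>\<integral>\<omega>. W \<omega> x * riemann_sum n \<omega> \<partial>M\<bar> \<le> sqrt (field_var x * (\<integral>\<omega>. (riemann_sum n \<omega>)^2 \<partial>M))"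
    unfolding field_var_def
    by (intro always_eventually allI Cauchy_Schwarz_lincomb lincomb_of_value lincomb_riemann_sum)
qed

lemma gaussian_char_lincomb_plus_field_integral:
  assumes "finite F"
  shows "gaussian_char M (\<lambda>\<omega>. (\<Sum>x\<in>F. c x * W \<omega> x) + \<beta> * field_integral \<omega>)
     ((\<integral>\<omega>. (\<Sum>x\<in>F. c x * W \<omega> x)^2 \<partial>M) + 2 * \<beta> * (\<Sum>x\<in>F. c x * cross_cov x) + \<beta>^2 * field_integral_var)"
proof -
  define L where "L \<omega> = (\<Sum>x\<in>F. c x * W \<omega> x)" for \<omega>
  have L: "lincomb_of W L" unfolding L_def[abs_def] by (rule lincomb_ofI[OF assms])
  have [measurable]: "L \<in> borel_measurable M" by (rule measurable_lincomb[OF L])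
  define v where "v n = (\<integral>\<omega>. (\<beta> * riemann_sum n \<omega> + L \<omega>)^2 \<partial>M)" for n
  have "\<exists>w. v \<longlonglongrightarrow> w \<and> gaussian_char M (\<lambda>\<omega>. L \<omega> + \<beta> * field_integral \<omega>) w"
  proof (rule gaussian_char_LIMSEQ)
    show "AE \<omega> in M. (\<lambda>n. \<beta> * riemann_sum n \<omega> + L \<omega>) \<longlonglongrightarrow> L \<omega> + \<beta> * field_integral \<omega>"
      using riemann_sum_LIMSEQ_AE by eventually_elim (auto intro!: tendsto_eq_intros)
    show "gaussian_char M (\<lambda>\<omega>. \<beta> * riemann_sum n \<omega> + L \<omega>) (v n)" for n
      unfolding v_def by (intro gaussian_char_lincomb lincomb_of_add lincomb_of_scale lincomb_riemann_sum L)
  qed measurable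
  then obtain w where w: "v \<longlonglongrightarrow> w" "gaussian_char M (\<lambda>\<omega>. L \<omega> + \<beta> * field_integral \<omega>) w"
    by blast
  have v_eq: "v n = (\<integral>\<omega>. (riemann_sum n \<omega>)^2 \<partial>M) * \<beta>^2 + 2 * (\<integral>\<omega>. riemann_sum n \<omega> * L \<omega> \<partial>M) * \<beta>
      + (\<integral>\<omega>. (L \<omega>)^2 \<partial>M)" for n
    unfolding v_def
    by (rule integral_square_affine) (auto intro!: integrable_square_lincomb lincomb_riemann_sum L)
  have cov_eq: "(\<integral>\<omega>. riemann_sum n \<omega> * L \<omega> \<partial>M) = (\<Sum>x\<in>F. c x * (\<integral>\<omega>. W \<omega> x * riemann_sum n \<omega> \<partial>M))" for n
    unfolding L_def by (subst mult.commute) (rule integral_sum_mult_lincomb[OF lincomb_riemann_sum assms])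
  have "v \<longlonglongrightarrow> field_integral_var * \<beta>^2 + 2 * (\<Sum>x\<in>F. c x * cross_cov x) * \<beta> + (\<integral>\<omega>. (L \<omega>)^2 \<partial>M)"
    unfolding v_eq cov_eq by (intro tendsto_intros field_integral_var_LIMSEQ cov_riemann_sum_LIMSEQ)
  then have "w = field_integral_var * \<beta>^2 + 2 * (\<Sum>x\<in>F. c x * cross_cov x) * \<beta> + (\<integral>\<omega>. (L \<omega>)^2 \<partial>M)"
    using w(1) LIMSEQ_unique by blast
  then show ?thesis using w(2) unfolding L_def by (simp add: ac_simps)
qed

end

section \<open>Lower bounds with positive probability\<close>

locale positively_correlated_domain = gaussian_field_on_domain M W N D
  for M :: "'w measure" and W :: "'w \<Rightarrow> real^'d \<Rightarrow> real" and N D +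
  fixes \<epsilon> :: real
  assumes eps_pos: "\<epsilon> > 0"
    and cross_cov_ge: "x \<in> D \<Longrightarrow> \<epsilon> \<le> cross_cov x"
    and nonempty_D: "D \<noteq> {}"
begin

lemma field_integral_var_pos: "field_integral_var > 0"
proof (rule ccontr)
  assume "\<not> field_integral_var > 0"
  then have "field_integral_var = 0" using field_integral_var_nonneg by simp
  obtain x where "x \<in> D" using nonempty_D by blast
  then show False
    using abs_cross_cov_le[of x] cross_cov_ge[of x] eps_pos \<open>field_integral_var = 0\<close> by simp
qed

definition regression_coeff :: "real^'d \<Rightarrow> real" where
  "regression_coeff x = cross_cov x / field_integral_var"

text \<open>The residual is uncorrelated with \<open>field_integral\<close>.\<close>
definition residual :: "real^'d \<Rightarrow> 'w \<Rightarrow> real" where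
  "residual x \<omega> = W \<omega> x - regression_coeff x * field_integral \<omega>"

lemma measurable_residual [measurable]: "residual x \<in> borel_measurable M"
  unfolding residual_def by measurable

lemma regression_coeff_ge: "x \<in> D \<Longrightarrow> \<epsilon> / field_integral_var \<le> regression_coeff x"
  unfolding regression_coeff_def using cross_cov_ge field_integral_var_pos by (simp add: divide_right_mono)

lemma bounded_regression_coeff:
  obtains B where "\<And>x. x \<in> D \<Longrightarrow> \<bar>regression_coeff x\<bar> \<le> B"
proof -
  obtain V where V: "\<And>z. z \<in> grid_hull D \<Longrightarrow> field_var z \<le> V"
    using field_var_bounded_on_compact[OF compact_grid_hull[OF bounded_D]] by blast
  have "\<bar>regression_coeff x\<bar> \<le> sqrt (V * field_integral_var) / field_integral_var" if "x \<in> D" for x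
  proof -
    have "\<bar>cross_cov x\<bar> \<le> sqrt (field_var x * field_integral_var)" by (rule abs_cross_cov_le)
    also have "\<dots> \<le> sqrt (V * field_integral_var)"
      using V[OF point_in_grid_hull[OF that]] field_integral_var_pos
      by (intro real_sqrt_le_mono mult_right_mono) auto
    finally show ?thesis
      unfolding regression_coeff_def using field_integral_var_pos by (simp add: abs_divide divide_right_mono)
  qed
  then show ?thesis using that by blast
qed

text \<open>Both sides are Gaussian characteristic functions at 1, and the variance of
  \<open>L + (v - c) Z\<close> splits as that of \<open>L - c Z\<close> plus \<open>v\<^sup>2\<close> times that of \<open>Z\<close> exactly because
  \<open>c\<close> is the regression coefficient.\<close>
lemma residual_char_factorizes:
  assumes "finite F"
  shows "(CLINT \<omega>|M. iexp ((\<Sum>x\<in>F. s x * residual x \<omega>) + v * field_integral \<omega>)) =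
    (CLINT \<omega>|M. iexp (\<Sum>x\<in>F. s x * residual x \<omega>)) * (CLINT \<omega>|M. iexp (v * field_integral \<omega>))"
proof -
  define L where "L \<omega> = (\<Sum>x\<in>F. s x * W \<omega> x)" for \<omega>
  define c where "c = (\<Sum>x\<in>F. s x * regression_coeff x)"
  define \<sigma>\<^sub>L where "\<sigma>\<^sub>L = (\<integral>\<omega>. (\<Sum>x\<in>F. s x * W \<omega> x)^2 \<partial>M)"
  define \<sigma> where "\<sigma> = field_integral_var"
  have "(\<Sum>x\<in>F. s x * cross_cov x) = c * \<sigma>"
    unfolding c_def \<sigma>_def regression_coeff_def sum_distrib_right using field_integral_var_pos by simp
  then have gauss: "gaussian_char M (\<lambda>\<omega>. L \<omega> + \<beta> * field_integral \<omega>) (\<sigma>\<^sub>L + 2 * \<beta> * (c * \<sigma>) + \<beta>^2 * \<sigma>)" for \<beta>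
    using gaussian_char_lincomb_plus_field_integral[OF assms, of s \<beta>]
    unfolding L_def[abs_def] \<sigma>\<^sub>L_def \<sigma>_def by simp
  have residual_sum: "(\<Sum>x\<in>F. s x * residual x \<omega>) = L \<omega> + (- c) * field_integral \<omega>" for \<omega>
    unfolding residual_def L_def c_def
    by (simp add: right_diff_distrib sum_subtractf sum_distrib_right mult.assoc)
  have joint: "(CLINT \<omega>|M. iexp ((\<Sum>x\<in>F. s x * residual x \<omega>) + v * field_integral \<omega>))
      = complex_of_real (exp (-(\<sigma>\<^sub>L + 2 * (v - c) * (c * \<sigma>) + (v - c)^2 * \<sigma>)/2))"
    unfolding residual_sum using gaussian_char_iexp[OF gauss[of "v - c"]] by (simp add: algebra_simps)
  have residual_part: "(CLINT \<omega>|M. iexp (\<Sum>x\<in>F. s x * residual x \<omega>))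
      = complex_of_real (exp (-(\<sigma>\<^sub>L + 2 * (- c) * (c * \<sigma>) + (- c)^2 * \<sigma>)/2))"
    unfolding residual_sum by (rule gaussian_char_iexp[OF gauss[of "- c"]])
  have integral_part: "(CLINT \<omega>|M. iexp (v * field_integral \<omega>)) = complex_of_real (exp (-(v^2 * \<sigma>)/2))"
    using gaussian_char_field_integral unfolding gaussian_char_def char_rv_def \<sigma>_def by simp
  have "-(\<sigma>\<^sub>L + 2 * (v - c) * (c * \<sigma>) + (v - c)^2 * \<sigma>)/2 =
      -(\<sigma>\<^sub>L + 2 * (- c) * (c * \<sigma>) + (- c)^2 * \<sigma>)/2 + -(v^2 * \<sigma>)/2"
    by (simp add: field_simps power2_eq_square)
  then have "exp (-(\<sigma>\<^sub>L + 2 * (v - c) * (c * \<sigma>) + (v - c)^2 * \<sigma>)/2) =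
      exp (-(\<sigma>\<^sub>L + 2 * (- c) * (c * \<sigma>) + (- c)^2 * \<sigma>)/2) * exp (-(v^2 * \<sigma>)/2)"
    by (simp only: exp_add)
  then show ?thesis
    unfolding joint residual_part integral_part by (simp del: of_real_mult add: of_real_mult[symmetric])
qed

lemma residual_bounded_below_prob_pos:
  fixes q :: "nat \<Rightarrow> real^'d"
  assumes "range q \<subseteq> D"
  obtains n :: nat where "prob {\<omega>\<in>space M. \<forall>i. - real n \<le> residual (q i) \<omega>} > 0"
proof -
  define G where "G n = {\<omega>\<in>space M. \<forall>i. - real n \<le> residual (q i) \<omega>}" for n :: nat
  have [measurable]: "G n \<in> sets M" for n unfolding G_def by measurable
  obtain R where R: "\<And>x. x \<in> D \<Longrightarrow> \<bar>regression_coeff x\<bar> \<le> R" using bounded_regression_coeff by blast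
  have cover: "space M - N \<subseteq> (\<Union>n. G n)"
  proof
    fix \<omega> assume \<omega>: "\<omega> \<in> space M - N"
    have "continuous_on UNIV (W \<omega>)" using continuous_off_N \<omega> by blast
    then obtain B where B: "\<And>z. z \<in> grid_hull D \<Longrightarrow> \<bar>W \<omega> z\<bar> \<le> B"
      using continuous_on_compact_abs_bound[OF continuous_on_subset compact_grid_hull[OF bounded_D]]
      by blast
    obtain n :: nat where n: "B + R * \<bar>field_integral \<omega>\<bar> \<le> real n" using real_arch_simple by blast
    have "- real n \<le> residual (q i) \<omega>" for i
    proof -
      have "q i \<in> D" using assms by auto
      then have "\<bar>W \<omega> (q i)\<bar> \<le> B" "\<bar>regression_coeff (q i) * field_integral \<omega>\<bar> \<le> R * \<bar>field_integral \<omega>\<bar>"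
        using B[OF point_in_grid_hull] R unfolding abs_mult by (auto intro!: mult_right_mono)
      then show ?thesis unfolding residual_def using n by (simp add: abs_le_iff)
    qed
    then show "\<omega> \<in> (\<Union>n. G n)" unfolding G_def using \<omega> by blast
  qed
  moreover have "\<exists>n. prob (G n) > 0"
  proof (rule ccontr)
    assume "\<nexists>n. prob (G n) > 0"
    then have "prob (G n) = 0" for n using measure_nonneg[of M] by (metis not_less order.antisym)
    then have "G n \<in> null_sets M" for n by (auto simp: emeasure_eq_measure)
    then have "(\<Union>n. G n) \<union> N \<in> null_sets M" using null_N by auto
    moreover have "space M \<subseteq> (\<Union>n. G n) \<union> N" using cover by blast
    ultimately have "space M \<in> null_sets M" by (meson null_sets_subset sets.top)
    then have "emeasure M (space M) = 0" by blast
    then show False using emeasure_space_1 by simp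
  qed
  ultimately show ?thesis using that unfolding G_def by blast
qed

lemma prob_first_values_ge:
  fixes q :: "nat \<Rightarrow> real^'d"
  assumes "range q \<subseteq> D" and "0 \<le> t" and t: "a + real n \<le> \<epsilon> / field_integral_var * t"
  shows "prob {\<omega>\<in>space M. \<forall>i. - real n \<le> residual (q i) \<omega>} * prob {\<omega>\<in>space M. t \<le> field_integral \<omega>}
    \<le> prob {\<omega>\<in>space M. \<forall>i\<le>m. a \<le> W \<omega> (q i)}"
proof -
  define F where "F = q ` {..m}"
  have "finite F" unfolding F_def by simp
  have [measurable]: "{\<omega>\<in>space M. \<forall>x\<in>F. residual x \<omega> \<in> {- real n..}} \<in> sets M"
    unfolding F_def by measurable
  have "prob {\<omega>\<in>space M. \<forall>i. - real n \<le> residual (q i) \<omega>} \<le> prob {\<omega>\<in>space M. \<forall>x\<in>F. residual x \<omega> \<in> {- real n..}}"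
    by (rule finite_measure_mono) (auto simp: F_def)
  then have "prob {\<omega>\<in>space M. \<forall>i. - real n \<le> residual (q i) \<omega>} * prob {\<omega>\<in>space M. t \<le> field_integral \<omega>}
      \<le> prob {\<omega>\<in>space M. \<forall>x\<in>F. residual x \<omega> \<in> {- real n..}} * prob {\<omega>\<in>space M. field_integral \<omega> \<in> {t..}}"
    by (simp add: mult_right_mono)
  also have "\<dots> = prob {\<omega>\<in>space M. (\<forall>x\<in>F. residual x \<omega> \<in> {- real n..}) \<and> field_integral \<omega> \<in> {t..}}"
    by (rule prob_indep_of_char_factorizes[OF \<open>finite F\<close> _ _ residual_char_factorizes[OF \<open>finite F\<close>], symmetric])
      auto
  also have "\<dots> \<le> prob {\<omega>\<in>space M. \<forall>i\<le>m. a \<le> W \<omega> (q i)}"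
  proof (rule finite_measure_mono)
    have "a \<le> W \<omega> (q i)" if "- real n \<le> residual (q i) \<omega>" "t \<le> field_integral \<omega>" for \<omega> i
    proof -
      have "0 < \<epsilon> / field_integral_var" using eps_pos field_integral_var_pos by simp
      moreover have "\<epsilon> / field_integral_var \<le> regression_coeff (q i)" using assms(1) by (intro regression_coeff_ge) auto
      ultimately have "\<epsilon> / field_integral_var * t \<le> regression_coeff (q i) * field_integral \<omega>"
        using that(2) \<open>0 \<le> t\<close> by (intro mult_mono) auto
      then show ?thesis using t that(1) unfolding residual_def by simp
    qed
    then show "{\<omega>\<in>space M. (\<forall>x\<in>F. residual x \<omega> \<in> {- real n..}) \<and> field_integral \<omega> \<in> {t..}}
        \<subseteq> {\<omega>\<in>space M. \<forall>i\<le>m. a \<le> W \<omega> (q i)}"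
      unfolding F_def by auto
  qed simp
  finally show ?thesis .
qed

lemma prob_values_ge_pos: "\<exists>A\<in>sets M. A \<subseteq> {\<omega>\<in>space M. \<forall>x\<in>D. a \<le> W \<omega> x} \<and> measure M A > 0"
proof -
  obtain Q where "countable Q" "Q \<subseteq> D" "D \<subseteq> closure Q" by (rule separable)
  define q where "q = from_nat_into Q"
  have "Q \<noteq> {}" using \<open>D \<subseteq> closure Q\<close> nonempty_D by auto
  then have "range q = Q" unfolding q_def using \<open>countable Q\<close> by simp
  obtain n where n: "prob {\<omega>\<in>space M. \<forall>i. - real n \<le> residual (q i) \<omega>} > 0"
    using residual_bounded_below_prob_pos \<open>range q = Q\<close> \<open>Q \<subseteq> D\<close> by blast
  define t where "t = max 0 ((a + real n) * field_integral_var / \<epsilon>)"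
  have "(a + real n) * field_integral_var / \<epsilon> \<le> t" unfolding t_def by simp
  then have t: "a + real n \<le> \<epsilon> / field_integral_var * t"
    using eps_pos field_integral_var_pos by (simp add: field_simps)
  define p where "p = prob {\<omega>\<in>space M. \<forall>i. - real n \<le> residual (q i) \<omega>} * prob {\<omega>\<in>space M. t \<le> field_integral \<omega>}"
  have "p > 0"
    unfolding p_def using n gaussian_char_prob_ge_pos[OF gaussian_char_field_integral field_integral_var_pos]
    by simp
  define A where "A m = {\<omega>\<in>space M. \<forall>i\<le>m. a \<le> W \<omega> (q i)}" for m
  have [measurable]: "A m \<in> sets M" for m unfolding A_def by measurable
  have lim: "(\<lambda>m. prob (A m)) \<longlonglongrightarrow> prob (\<Inter>m. A m)"
    by (rule finite_Lim_measure_decseq) (auto simp: decseq_def A_def)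
  have p_le: "p \<le> prob (A m)" for m
    unfolding p_def A_def using \<open>range q = Q\<close> \<open>Q \<subseteq> D\<close> t by (intro prob_first_values_ge) (auto simp: t_def)
  have "p \<le> prob (\<Inter>m. A m)" using lim by (rule LIMSEQ_le_const) (use p_le in auto)
  moreover have "measure M ((\<Inter>m. A m) - N) = prob (\<Inter>m. A m)"
    by (rule measure_Diff_null_set[OF _ null_N]) measurable
  moreover have "(\<Inter>m. A m) - N \<subseteq> {\<omega>\<in>space M. \<forall>x\<in>D. a \<le> W \<omega> x}"
  proof safe
    fix \<omega> x assume \<omega>: "\<omega> \<in> (\<Inter>m. A m)" "\<omega> \<notin> N" and "x \<in> D"
    then have "\<omega> \<in> space M" unfolding A_def by auto
    then have "closed {y. a \<le> W \<omega> y}"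
      using continuous_off_N \<omega>(2) by (intro closed_Collect_le continuous_on_const) auto
    moreover have "Q \<subseteq> {y. a \<le> W \<omega> y}" using \<omega>(1) \<open>range q = Q\<close> unfolding A_def by auto
    ultimately have "closure Q \<subseteq> {y. a \<le> W \<omega> y}" by (rule closure_minimal[rotated])
    then show "a \<le> W \<omega> x" using \<open>D \<subseteq> closure Q\<close> \<open>x \<in> D\<close> by auto
  qed (auto simp: A_def)
  ultimately show ?thesis using \<open>p > 0\<close> by (intro bexI[of _ "(\<Inter>m. A m) - N"]) auto
qed

end

section \<open>The annuli\<close>

lemma open_Eball: "open (Eball r n :: (real^'d) set)"
  unfolding Eball_def by (intro open_Collect_less continuous_intros)

lemma open_Ecube: "open (Ecube r n :: (real^'d) set)"
proof -
  have "Ecube r n = (\<Inter>i\<in>UNIV. {x::real^'d. \<bar>x $ i\<bar> < r ^ n})" unfolding Ecube_def by auto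
  moreover have "open {x::real^'d. \<bar>x $ i\<bar> < r ^ n}" for i
    by (intro open_Collect_less continuous_intros)
  ultimately show ?thesis by (auto intro!: open_INT)
qed

lemma bounded_Eball: "bounded (Eball r n :: (real^'d) set)"
  unfolding Eball_def bounded_iff by (intro exI[of _ "r^n"]) auto

lemma bounded_Ecube: "bounded (Ecube r n :: (real^'d) set)"
proof -
  have "norm x \<le> real CARD('d) * r^n" if "x \<in> Ecube r n" for x :: "real^'d"
  proof -
    have "norm x \<le> (\<Sum>i\<in>UNIV. \<bar>x $ i\<bar>)" by (rule norm_le_l1_cart)
    also have "\<dots> \<le> (\<Sum>i\<in>(UNIV::'d set). r^n)"
      using that unfolding Ecube_def by (intro sum_mono) (simp add: less_imp_le)
    finally show ?thesis by simp
  qed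
  then show ?thesis unfolding bounded_iff by blast
qed

theorem lemma3p1:
  fixes M :: "'w measure" and W :: "'w \<Rightarrow> real^'d \<Rightarrow> real"
    and r :: real and E :: "nat \<Rightarrow> (real^'d) set" and \<epsilon> a :: real
  assumes "prob_space M"
    and "CARD('d) \<ge> 2"
    and "r > 1"
    and "centered_gaussian_field M W"
    and "AE \<omega> in M. continuous_on UNIV (W \<omega>)"
    and "AE \<omega> in M. W \<omega> 0 = 0"
    and "E = Eball r \<or> E = Ecube r"
    and "\<epsilon> > 0"
    and "\<forall>x \<in> E 1 - E 0.
           (LINT y:(E 1 - E 0)|lborel. integral\<^sup>L M (\<lambda>\<omega>. W \<omega> x * W \<omega> y)) \<ge> \<epsilon>"
  shows "\<exists>A \<in> sets M. A \<subseteq> {\<omega> \<in> space M. \<forall>x \<in> E 1 - E 0. W \<omega> x \<ge> a}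
           \<and> measure M A > 0"
proof -
  interpret prob_space M by fact
  obtain N where N: "{\<omega>\<in>space M. \<not> continuous_on UNIV (W \<omega>)} \<subseteq> N"
    and "emeasure M N = 0" "N \<in> sets M"
    using assms(5) by (rule AE_E)
  have "open (E n)" "bounded (E n)" for n
    using assms(7) open_Eball open_Ecube bounded_Eball bounded_Ecube by auto
  then have "E 1 - E 0 \<in> sets lborel" "bounded (E 1 - E 0)"
    using bounded_subset[of "E 1" "E 1 - E 0"] by auto
  then interpret gaussian_field_on_domain M W N "E 1 - E 0"
    using assms(4) N \<open>emeasure M N = 0\<close> \<open>N \<in> sets M\<close> by unfold_locales auto
  show ?thesis
  proof (cases "E 1 - E 0 = {}")
    case True
    then show ?thesis using prob_space by (intro bexI[of _ "space M"]) auto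
  next
    case False
    have "\<epsilon> \<le> cross_cov x" if "x \<in> E 1 - E 0" for x
      using assms(9) that unfolding cross_cov_def field_cov_def by blast
    then interpret positively_correlated_domain M W N "E 1 - E 0" \<epsilon>
      using assms(8) False by unfold_locales
    show ?thesis by (rule prob_values_ge_pos)
  qed
qed

end
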